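(* Let $k\in\hat I$ and $r\in\mathbb Z_{>0}$. Let $\mathcal R$ be the set of triples $(\lambda,\nu,\mu)$ with $(\lambda,\mu)\in\mathcal P_k^{s_k}$ and $\nu=(\nu_1,\dots,\nu_r)$ a sequence of integers with $\nu_1\ge\dots\ge\nu_r\ge0$, where $\nu_j=\nu_{j+1}$ is allowed only if $s_{k-\nu_j}=s_k$, and $\nu_r\ge\mu_1$, where $\nu_r=\mu_1$ is allowed only if $s_{k-\mu_1}=s_k$. For such a triple put $\mathrm{wt}(\lambda,\nu,\mu)=\mathrm{wt}_k(\lambda,\mu)\prod_{j=1}^r\prod_{t=1}^{\nu_j}z_{k-t}$. Then $$\sum_{(\lambda,\nu,\mu)\in\mathcal R}\mathrm{wt}(\lambda,\nu,\mu)=\sum_{\substack{a,b\in\mathbb Z_{\ge0}^N\\|a|=|b|-r}}p^{-b_k}\prod_{j=k}^{N+k-1}z_{k,j}^{a_j}\,z_{j,N+k-1}^{b_j}\,\frac{p^{a_j(a_j-1)(1-s_ks_{j+1})/4+b_j(b_j-1)(1-s_ks_j)/4}}{(p)_{a_j}(p)_{b_j}},$$ i.e. this is the character of the Fock module $\mathcal F_{s_k(r\Lambda_{k-1}-(r+1)\Lambda_k)}$ of $\mathcal E_{\mathbf s}$.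
   Context: Fix $m\ne n$, $N=m+n\ge3$ and a parity sequence $\mathbf s=(s_1,\dots,s_N)\in\{1,-1\}^N$ with exactly $m$ entries $1$, extended by $s_{i+N}=s_i$; $\hat I=\{0,\dots,N-1\}$. Formal variables $z_0,\dots,z_{N-1}$ with $z_{i+N}=z_i$, $p=z_0\cdots z_{N-1}$, $z_{i,j}=\prod_{t=i}^jz_t$ ($i\le j$), $(p)_s=\prod_{i=1}^s(1-p^i)$; $|a|=\sum_ia_i$, $a_{i+N}=a_i$, same for $b$. For $k\in\mathbb Z$, $\epsilon\in\{1,-1\}$, $\mathcal P_k^\epsilon$ is the set of pairs $(\lambda,\mu)$ of weakly decreasing sequences of non-negative integers $\lambda=(\lambda_1,\lambda_2,\dots)$, $\mu=(\mu_1,\mu_2,\dots)$, finitely many nonzero, such that: $\mu_j=0$ whenever $\lambda_j=0$; $\lambda_j=\lambda_{j+1}$ only if $s_{k+\lambda_j}=\epsilon$ or $\lambda_j=\mu_j=0$; $\mu_j=\mu_{j+1}$ only if $s_{k-\mu_j}=\epsilon$ or $\mu_j=\lambda_{j+1}=0$. $\mathrm{wt}_k(\lambda,\mu)=\prod_{j\ge1}\prod_{t=0}^{\lambda_j-1}z_{k+t}\cdot\prod_{j\ge1}\prod_{t=1}^{\mu_j}z_{k-t}$. The set $\mathcal R$ indexes a basis of the Fock module $\mathcal F_{s_k(r\Lambda_{k-1}-(r+1)\Lambda_k)}$ and $\mathrm{wt}$ is its grading normalised so that the highest weight vector has degree $1$. *)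

theory Defs
  imports "HOL-Analysis.Analysis" "HOL-Computational_Algebra.Formal_Power_Series"
begin

text \<open>Monomials in the variables z_0,...,z_{N-1} are represented by exponent vectors
  e :: nat => int (entries at positions >= N are 0; negative entries allowed for Laurent
  monomials).  A pair of partitions lambda = (lambda_1, lambda_2, ...) is encoded as a
  function lam :: nat => nat with lam i = lambda_{i+1}.  The parity sequence is
  s :: int => int, periodic of period N.\<close>

definition Pk :: "nat \<Rightarrow> (int \<Rightarrow> int) \<Rightarrow> int \<Rightarrow> int \<Rightarrow> ((nat \<Rightarrow> nat) \<times> (nat \<Rightarrow> nat)) set" where
  "Pk N s k \<epsilon> = {(lam, mu).
      (\<forall>j. lam (Suc j) \<le> lam j) \<and> (\<forall>j. mu (Suc j) \<le> mu j) \<and>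
      finite {j. lam j \<noteq> 0} \<and> finite {j. mu j \<noteq> 0} \<and>
      (\<forall>j. lam j = 0 \<longrightarrow> mu j = 0) \<and>
      (\<forall>j. lam j = lam (Suc j) \<longrightarrow> s (k + int (lam j)) = \<epsilon> \<or> (lam j = 0 \<and> mu j = 0)) \<and>
      (\<forall>j. mu j = mu (Suc j) \<longrightarrow> s (k - int (mu j)) = \<epsilon> \<or> (mu j = 0 \<and> lam (Suc j) = 0))}"

text \<open>Exponent vector of prod_{t=0}^{l-1} z_{k+t} and of prod_{t=1}^{l} z_{k-t}.\<close>
definition upexp :: "nat \<Rightarrow> int \<Rightarrow> nat \<Rightarrow> nat \<Rightarrow> int" where
  "upexp N k l i = int (card {t. t < l \<and> (k + int t) mod int N = int i})"

definition downexp :: "nat \<Rightarrow> int \<Rightarrow> nat \<Rightarrow> nat \<Rightarrow> int" where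
  "downexp N k l i = int (card {t. 1 \<le> t \<and> t \<le> l \<and> (k - int t) mod int N = int i})"

definition wtk :: "nat \<Rightarrow> int \<Rightarrow> (nat \<Rightarrow> nat) \<Rightarrow> (nat \<Rightarrow> nat) \<Rightarrow> nat \<Rightarrow> int" where
  "wtk N k lam mu i = (\<Sum>j\<in>{j. lam j \<noteq> 0}. upexp N k (lam j) i)
                      + (\<Sum>j\<in>{j. mu j \<noteq> 0}. downexp N k (mu j) i)"

definition Rset :: "nat \<Rightarrow> (int \<Rightarrow> int) \<Rightarrow> nat \<Rightarrow> nat \<Rightarrow>
    ((nat \<Rightarrow> nat) \<times> nat list \<times> (nat \<Rightarrow> nat)) set" where
  "Rset N s k r = {(lam, nu, mu).
      (lam, mu) \<in> Pk N s (int k) (s (int k)) \<and> length nu = r \<and>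
      (\<forall>j. Suc j < r \<longrightarrow> nu ! Suc j \<le> nu ! j) \<and>
      (\<forall>j. Suc j < r \<longrightarrow> nu ! Suc j = nu ! j \<longrightarrow> s (int k - int (nu ! j)) = s (int k)) \<and>
      nu ! (r - 1) \<ge> mu 0 \<and>
      (nu ! (r - 1) = mu 0 \<longrightarrow> s (int k - int (mu 0)) = s (int k))}"

definition wtR :: "nat \<Rightarrow> nat \<Rightarrow> (nat \<Rightarrow> nat) \<times> nat list \<times> (nat \<Rightarrow> nat) \<Rightarrow> nat \<Rightarrow> int" where
  "wtR N k x i = (case x of (lam, nu, mu) \<Rightarrow>
      wtk N (int k) lam mu i + (\<Sum>j<length nu. downexp N (int k) (nu ! j) i))"

text \<open>Exponent vector of z_{i,j} = prod_{t=i}^{j} z_t (indices mod N).\<close>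
definition zr :: "nat \<Rightarrow> nat \<Rightarrow> nat \<Rightarrow> nat \<Rightarrow> int" where
  "zr N i j t = int (card {u. i \<le> u \<and> u \<le> j \<and> u mod N = t})"

text \<open>(p)_a as a power series in one variable, and 1/((p)_a (p)_b).\<close>
definition qpoch :: "nat \<Rightarrow> real fps" where
  "qpoch a = (\<Prod>i\<in>{1..a}. 1 - fps_X ^ i)"

text \<open>Laurent monomial part of the (a,b)-summand on the right hand side, including
  the factor p^{-b_k} and the p-power p^{sum_j (a_j(a_j-1)(1-s_k s_{j+1})/4 + b_j(b_j-1)(1-s_k s_j)/4)}
  (each power of p = z_0...z_{N-1} contributes 1 to every exponent).\<close>
definition rhs_mon :: "nat \<Rightarrow> (int \<Rightarrow> int) \<Rightarrow> nat \<Rightarrow> (nat \<Rightarrow> nat) \<Rightarrow> (nat \<Rightarrow> nat) \<Rightarrow> nat \<Rightarrow> int" where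
  "rhs_mon N s k a b i =
     (if i < N then
        - int (b k)
        + (\<Sum>j\<in>{k..N+k-1}.
             (int (a (j mod N)) * (int (a (j mod N)) - 1) * (1 - s (int k) * s (int j + 1))) div 4
           + (int (b (j mod N)) * (int (b (j mod N)) - 1) * (1 - s (int k) * s (int j))) div 4)
        + (\<Sum>j\<in>{k..N+k-1}.
             int (a (j mod N)) * zr N k j i + int (b (j mod N)) * zr N j (N+k-1) i)
      else 0)"

text \<open>Coefficient of the monomial with exponent vector e in the formal series
  z^{m} * F(p), where p = z_0 ... z_{N-1} and F is a power series in one variable.\<close>
definition coeff_mon_p :: "nat \<Rightarrow> (nat \<Rightarrow> int) \<Rightarrow> real fps \<Rightarrow> (nat \<Rightarrow> int) \<Rightarrow> real" where
  "coeff_mon_p N m F e =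
     (if (\<exists>n::nat. \<forall>i<N. e i = m i + int n)
      then fps_nth F (THE n. \<forall>i<N. e i = m i + int n) else 0)"

definition rhs_coeff :: "nat \<Rightarrow> (int \<Rightarrow> int) \<Rightarrow> nat \<Rightarrow> (nat \<Rightarrow> nat) \<Rightarrow> (nat \<Rightarrow> nat) \<Rightarrow> (nat \<Rightarrow> int) \<Rightarrow> real" where
  "rhs_coeff N s k a b e = coeff_mon_p N (rhs_mon N s k a b) (inverse (\<Prod>j<N. qpoch (a j) * qpoch (b j))) e"

end

theory Submission
  imports Defs "HOL-Library.Multiset" "HOL-Library.More_List"
begin

text \<open>
  A triple \<open>(\<lambda>, \<nu>, \<mu>)\<close> in \<open>R\<close> is determined by the multiset of parts of \<open>\<lambda>\<close> and the
  multiset of entries of \<open>\<nu>\<close> and \<open>\<mu>\<close>: the interlacing conditions say precisely that \<open>\<nu>\<close>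
  followed by \<open>\<mu>\<close> is the decreasing arrangement of the second multiset, which has \<open>r\<close> more
  elements than the first, and a value may repeat only where the parity sequence allows it.
  The monomial of a part depends only on its residue class modulo \<open>N\<close>, up to one factor
  \<open>p = z_0 \<cdots> z_(N-1)\<close> per additional period.  Sorting both multisets into residue classes,
  with \<open>a_j\<close> resp. \<open>b_j\<close> parts in class \<open>j\<close>, therefore factors the generating function into
  partitions with a prescribed number of parts in each class, counted by \<open>1/(p)_a\<close>, or by
  \<open>p^(a(a-1)/2)/(p)_a\<close> where repetitions are forbidden, while the smallest parts of the classes
  produce the monomial \<open>\<Prod>\<^sub>j z_(k,j)^a_j z_(j,N+k-1)^b_j\<close> times \<open>p^(-b_k)\<close>.
\<close>

section \<open>Generating functions of weighted sets and of partitions\<close>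

definition count_fps :: "'a set \<Rightarrow> ('a \<Rightarrow> nat) \<Rightarrow> real fps" where
  "count_fps A w = Abs_fps (\<lambda>n. real (card {x\<in>A. w x = n}))"

definition finite_fibres :: "'a set \<Rightarrow> ('a \<Rightarrow> nat) \<Rightarrow> bool" where
  "finite_fibres A w \<longleftrightarrow> (\<forall>n. finite {x\<in>A. w x = n})"

lemma fps_nth_count_fps [simp]: "fps_nth (count_fps A w) n = real (card {x\<in>A. w x = n})"
  by (simp add: count_fps_def)

lemma count_fps_cong: "(\<And>x. x \<in> A \<Longrightarrow> w x = v x) \<Longrightarrow> count_fps A w = count_fps A v"
  by (rule fps_ext) (auto intro!: arg_cong[where f = card])

lemma bij_betw_Collect:
  assumes "bij_betw f A B" "\<And>x. x \<in> A \<Longrightarrow> P x \<longleftrightarrow> Q (f x)"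
  shows "bij_betw f {x\<in>A. P x} {y\<in>B. Q y}"
proof -
  have "inj_on f {x\<in>A. P x}"
    using assms(1) by (auto simp: bij_betw_def intro: inj_on_subset)
  moreover have "f ` {x\<in>A. P x} = {y\<in>B. Q y}"
    using assms by (force simp: bij_betw_def)
  ultimately show ?thesis by (simp add: bij_betw_def)
qed

lemma
  assumes "bij_betw f A B" "\<And>x. x \<in> A \<Longrightarrow> v (f x) = w x"
  shows count_fps_bij_betw: "count_fps A w = count_fps B v"
    and finite_fibres_bij_betw: "finite_fibres A w \<Longrightarrow> finite_fibres B v"
proof -
  have fibre: "bij_betw f {x\<in>A. w x = n} {y\<in>B. v y = n}" for n
    by (rule bij_betw_Collect[OF assms(1)]) (simp add: assms(2))
  show "count_fps A w = count_fps B v"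
    by (rule fps_ext) (simp add: bij_betw_same_card[OF fibre])
  show "finite_fibres A w \<Longrightarrow> finite_fibres B v"
    unfolding finite_fibres_def using fibre bij_betw_finite by blast
qed

lemma
  assumes "finite_fibres A w" "finite_fibres B v"
  shows count_fps_Times: "count_fps (A \<times> B) (\<lambda>(x, y). w x + v y) = count_fps A w * count_fps B v"
    and finite_fibres_Times: "finite_fibres (A \<times> B) (\<lambda>(x, y). w x + v y)"
proof -
  have fibre: "{p\<in>A \<times> B. (\<lambda>(x, y). w x + v y) p = n} =
      (\<Union>i\<in>{0..n}. {x\<in>A. w x = i} \<times> {y\<in>B. v y = n - i})" for n
    by auto
  have fin: "finite ({x\<in>A. w x = i} \<times> {y\<in>B. v y = j})" for i j
    using assms by (auto simp: finite_fibres_def)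
  show "finite_fibres (A \<times> B) (\<lambda>(x, y). w x + v y)"
    unfolding finite_fibres_def fibre using fin by auto
  show "count_fps (A \<times> B) (\<lambda>(x, y). w x + v y) = count_fps A w * count_fps B v"
  proof (rule fps_ext)
    fix n
    have "card {p\<in>A \<times> B. (\<lambda>(x, y). w x + v y) p = n} =
        (\<Sum>i\<in>{0..n}. card ({x\<in>A. w x = i} \<times> {y\<in>B. v y = n - i}))"
      unfolding fibre by (rule card_UN_disjoint) (use fin in auto)
    then show "fps_nth (count_fps (A \<times> B) (\<lambda>(x, y). w x + v y)) n = fps_nth (count_fps A w * count_fps B v) n"
      by (simp add: fps_mult_nth card_cartesian_product)
  qed
qed

lemma count_fps_PiE:
  assumes "finite I" "\<And>i. i \<in> I \<Longrightarrow> finite_fibres (B i) (w i)"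
  shows "count_fps (PiE I B) (\<lambda>W. \<Sum>i\<in>I. w i (W i)) = (\<Prod>i\<in>I. count_fps (B i) (w i)) \<and>
         finite_fibres (PiE I B) (\<lambda>W. \<Sum>i\<in>I. w i (W i))"
  using assms
proof (induction I rule: finite_induct)
  case empty
  have "count_fps {\<lambda>x. undefined} (\<lambda>W. 0::nat) = 1"
    by (rule fps_ext) simp
  then show ?case by (simp add: finite_fibres_def)
next
  case (insert i I)
  let ?w = "\<lambda>W. \<Sum>j\<in>I. w j (W j)" and ?upd = "\<lambda>(y, g). g(i := y)"
  have IH: "count_fps (PiE I B) ?w = (\<Prod>j\<in>I. count_fps (B j) (w j))" "finite_fibres (PiE I B) ?w"
    using insert by auto
  have bij: "bij_betw ?upd (B i \<times> PiE I B) (PiE (insert i I) B)"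
    unfolding bij_betw_def using inj_combinator[OF insert(2)] PiE_insert_eq by metis
  have wt: "(\<Sum>j\<in>insert i I. w j (?upd p j)) = (\<lambda>(x, y). w i x + ?w y) p"
    if "p \<in> B i \<times> PiE I B" for p
  proof -
    obtain y g where p: "p = (y, g)" by (cases p)
    have "(\<Sum>j\<in>I. w j ((g(i := y)) j)) = ?w g"
      using insert(2) by (intro sum.cong) auto
    then show ?thesis using p insert(1,2) by simp
  qed
  have fib_i: "finite_fibres (B i) (w i)"
    using insert.prems by simp
  have "count_fps (B i \<times> PiE I B) (\<lambda>(x, y). w i x + ?w y) =
      count_fps (PiE (insert i I) B) (\<lambda>W. \<Sum>j\<in>insert i I. w j (W j))"
    by (rule count_fps_bij_betw[OF bij]) (rule wt)
  moreover have "finite_fibres (PiE (insert i I) B) (\<lambda>W. \<Sum>j\<in>insert i I. w j (W j))"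
    by (rule finite_fibres_bij_betw[OF bij]) (rule wt, assumption, rule finite_fibres_Times[OF fib_i IH(2)])
  ultimately show ?case
    using count_fps_Times[OF fib_i IH(2)] IH(1) insert(1,2) by simp
qed

lemma inverse_prod_fps: "inverse (\<Prod>i\<in>I. f i :: 'a::field fps) = (\<Prod>i\<in>I. inverse (f i))"
  by (induction I rule: infinite_finite_induct) (simp_all add: fps_inverse_mult)

definition part_msets :: "bool \<Rightarrow> nat \<Rightarrow> nat multiset set" where
  "part_msets d c = {X. size X = c \<and> (d \<longrightarrow> (\<forall>t. count X t \<le> 1))}"

lemma finite_fibres_part_msets: "finite_fibres (part_msets d c) sum_mset"
  unfolding finite_fibres_def
proof
  fix n
  have "{X \<in> part_msets d c. sum_mset X = n} \<subseteq> multisets_of_size {..n} c"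
    by (auto simp: part_msets_def multisets_of_size_def dest: multi_member_split)
  then show "finite {X \<in> part_msets d c. sum_mset X = n}"
    by (rule finite_subset) auto
qed

lemma count_image_mset_inj: "inj f \<Longrightarrow> count (image_mset f M) (f x) = count M x"
  by (induction M) (auto dest: injD)

lemma part_msets_image_Suc: "image_mset Suc Y \<in> part_msets d c \<longleftrightarrow> Y \<in> part_msets d c"
proof -
  have "count (image_mset Suc Y) (Suc t) = count Y t" for t
    by (rule count_image_mset_inj) (simp add: inj_def)
  moreover have "count (image_mset Suc Y) 0 = 0"
    by (simp add: count_eq_zero_iff)
  ultimately have "(\<forall>t. count (image_mset Suc Y) t \<le> 1) \<longleftrightarrow> (\<forall>t. count Y t \<le> 1)"
    by (metis not0_implies_Suc zero_le)
  then show ?thesis by (auto simp: part_msets_def)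
qed

lemma sum_mset_image_Suc: "sum_mset (image_mset Suc Y) = sum_mset Y + size Y"
  by (induction Y) auto

lemma card_part_msets_without_zero:
  "card {X \<in> part_msets d c. sum_mset X = n \<and> 0 \<notin># X} =
     (if c \<le> n then card {Y \<in> part_msets d c. sum_mset Y = n - c} else 0)"
proof -
  have shift: "image_mset Suc (image_mset (\<lambda>x. x - 1) X) = X" if "0 \<notin># X" for X :: "nat multiset"
    using that by (induction X) auto
  have sum_shift: "sum_mset X = sum_mset (image_mset (\<lambda>x. x - 1) X) + size X" if "0 \<notin># X" for X
    using sum_mset_image_Suc[of "image_mset (\<lambda>x. x - 1) X"] by (simp only: shift[OF that] size_image_mset)
  show ?thesis
  proof (cases "c \<le> n")
    case True
    have "bij_betw (image_mset Suc) {Y \<in> part_msets d c. sum_mset Y = n - c}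
        {X \<in> part_msets d c. sum_mset X = n \<and> 0 \<notin># X}"
    proof (rule bij_betw_byWitness[where f' = "image_mset (\<lambda>x. x - 1)"])
      show "image_mset Suc ` {Y \<in> part_msets d c. sum_mset Y = n - c}
          \<subseteq> {X \<in> part_msets d c. sum_mset X = n \<and> 0 \<notin># X}"
      proof safe
        fix Y assume Y: "Y \<in> part_msets d c" "sum_mset Y = n - c"
        then show "image_mset Suc Y \<in> part_msets d c" by (simp add: part_msets_image_Suc)
        show "sum_mset (image_mset Suc Y) = n"
          using Y True by (simp add: sum_mset_image_Suc part_msets_def)
      qed auto
      show "image_mset (\<lambda>x. x - 1) ` {X \<in> part_msets d c. sum_mset X = n \<and> 0 \<notin># X}
          \<subseteq> {Y \<in> part_msets d c. sum_mset Y = n - c}"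
      proof safe
        fix X assume X: "X \<in> part_msets d c" "0 \<notin># X"
        then show "image_mset (\<lambda>x. x - 1) X \<in> part_msets d c"
          by (metis part_msets_image_Suc shift)
        show "sum_mset (image_mset (\<lambda>x. x - 1) X) = sum_mset X - c"
          using sum_shift[OF X(2)] X(1) by (simp add: part_msets_def)
      qed
    qed (simp add: multiset.map_comp o_def, use shift in blast)
    with True show ?thesis by (simp add: bij_betw_same_card)
  next
    case False
    have "c \<le> sum_mset X" if "X \<in> part_msets d c" "0 \<notin># X" for X
      using sum_shift[OF that(2)] that(1) by (simp add: part_msets_def)
    with False have none: "{X \<in> part_msets d c. sum_mset X = n \<and> 0 \<notin># X} = {}"
      by auto
    show ?thesis unfolding none using False by simp
  qed
qed

lemma card_part_msets_with_zero:
  assumes "0 < c"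
  shows "card {X \<in> part_msets d c. sum_mset X = n \<and> 0 \<in># X} =
    card {Y \<in> part_msets d (c - 1). sum_mset Y = n \<and> (d \<longrightarrow> 0 \<notin># Y)}"
proof -
  have "bij_betw (\<lambda>X. X - {#0#}) {X \<in> part_msets d c. sum_mset X = n \<and> 0 \<in># X}
      {Y \<in> part_msets d (c - 1). sum_mset Y = n \<and> (d \<longrightarrow> 0 \<notin># Y)}"
  proof (rule bij_betw_byWitness[where f' = "add_mset 0"])
    show "(\<lambda>X. X - {#0#}) ` {X \<in> part_msets d c. sum_mset X = n \<and> 0 \<in># X}
        \<subseteq> {Y \<in> part_msets d (c - 1). sum_mset Y = n \<and> (d \<longrightarrow> 0 \<notin># Y)}"
    proof safe
      fix X assume X: "X \<in> part_msets d c" "0 \<in># X"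
      have "count (X - {#0#}) t \<le> count X t" for t
        by simp
      then show "X - {#0#} \<in> part_msets d (c - 1)"
        using X by (auto simp: part_msets_def size_Diff_singleton intro: order_trans)
      show "sum_mset (X - {#0#}) = sum_mset X"
      proof -
        have "sum_mset X = sum_mset (add_mset 0 (X - {#0#}))"
          by (simp only: insert_DiffM[OF X(2)])
        then show ?thesis by simp
      qed
      show False if d "0 \<in># X - {#0#}"
      proof -
        have "count X 0 \<le> 1" using X(1) that(1) by (simp add: part_msets_def)
        with that(2) show False by (simp add: in_diff_count)
      qed
    qed
    show "add_mset 0 ` {Y \<in> part_msets d (c - 1). sum_mset Y = n \<and> (d \<longrightarrow> 0 \<notin># Y)}
        \<subseteq> {X \<in> part_msets d c. sum_mset X = n \<and> 0 \<in># X}"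
    proof (rule image_subsetI)
      fix Y assume "Y \<in> {Y \<in> part_msets d (c - 1). sum_mset Y = n \<and> (d \<longrightarrow> 0 \<notin># Y)}"
      then have Y: "Y \<in> part_msets d (c - 1)" "sum_mset Y = n" "d \<longrightarrow> 0 \<notin># Y" by auto
      then have "count (add_mset 0 Y) t \<le> 1" if d for t
        using that by (auto simp: part_msets_def not_in_iff)
      with Y assms show "add_mset 0 Y \<in> {X \<in> part_msets d c. sum_mset X = n \<and> 0 \<in># X}"
        by (simp add: part_msets_def)
    qed
  qed (simp_all add: insert_DiffM)
  then show ?thesis by (rule bij_betw_same_card)
qed

lemma count_fps_part_msets_rec:
  assumes "0 < c"
  shows "count_fps (part_msets d c) sum_mset =
    fps_X ^ (if d then c - 1 else 0) * count_fps (part_msets d (c - 1)) sum_mset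
    + fps_X ^ c * count_fps (part_msets d c) sum_mset"
proof (rule fps_ext)
  fix n
  have fin: "finite {X \<in> part_msets d c. sum_mset X = n}"
    using finite_fibres_part_msets by (auto simp: finite_fibres_def)
  have "card {X \<in> part_msets d c. sum_mset X = n} =
      card ({X \<in> part_msets d c. sum_mset X = n \<and> 0 \<in># X} \<union>
            {X \<in> part_msets d c. sum_mset X = n \<and> 0 \<notin># X})"
    by (rule arg_cong[where f = card]) auto
  also have "\<dots> = card {X \<in> part_msets d c. sum_mset X = n \<and> 0 \<in># X} +
      card {X \<in> part_msets d c. sum_mset X = n \<and> 0 \<notin># X}"
    by (rule card_Un_disjoint) (auto intro: rev_finite_subset[OF fin])
  finally have split: "card {X \<in> part_msets d c. sum_mset X = n} =
      card {X \<in> part_msets d c. sum_mset X = n \<and> 0 \<in># X} +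
      card {X \<in> part_msets d c. sum_mset X = n \<and> 0 \<notin># X}" .
  have zero: "card {X \<in> part_msets d c. sum_mset X = n \<and> 0 \<in># X} =
      (if d then (if c - 1 \<le> n then card {Y \<in> part_msets d (c - 1). sum_mset Y = n - (c - 1)} else 0)
       else card {Y \<in> part_msets d (c - 1). sum_mset Y = n})"
    using card_part_msets_with_zero[OF assms] card_part_msets_without_zero[of d "c - 1" n]
    by (cases d) auto
  show "fps_nth (count_fps (part_msets d c) sum_mset) n =
      fps_nth (fps_X ^ (if d then c - 1 else 0) * count_fps (part_msets d (c - 1)) sum_mset
        + fps_X ^ c * count_fps (part_msets d c) sum_mset) n"
    unfolding fps_add_nth fps_X_power_mult_nth fps_nth_count_fps
    using split zero card_part_msets_without_zero[of d c n] by auto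
qed

lemma qpoch_Suc: "qpoch (Suc c) = qpoch c * (1 - fps_X ^ Suc c)"
  unfolding qpoch_def by (simp add: prod.cl_ivl_Suc)

lemma count_fps_part_msets:
  "count_fps (part_msets d c) sum_mset = fps_X ^ (if d then c * (c - 1) div 2 else 0) * inverse (qpoch c)"
proof (induction c)
  case 0
  have "{X \<in> part_msets d 0. sum_mset X = n} = (if n = 0 then {{#}} else {})" for n
    by (auto simp: part_msets_def)
  then have "count_fps (part_msets d 0) sum_mset = 1"
    by (intro fps_ext) simp
  then show ?case by (simp add: qpoch_def)
next
  case (Suc c)
  let ?F = "count_fps (part_msets d (Suc c)) sum_mset" and ?u = "1 - fps_X ^ Suc c :: real fps"
  have rec: "?F = fps_X ^ (if d then c else 0) * count_fps (part_msets d c) sum_mset + fps_X ^ Suc c * ?F"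
    using count_fps_part_msets_rec[OF zero_less_Suc, of d c] unfolding diff_Suc_1 .
  have "?F * ?u = ?F - fps_X ^ Suc c * ?F"
    by (simp add: algebra_simps)
  also have "\<dots> = fps_X ^ (if d then c else 0) * count_fps (part_msets d c) sum_mset"
    using rec by (metis add_diff_cancel_right')
  also have "\<dots> = fps_X ^ ((if d then c else 0) + (if d then c * (c - 1) div 2 else 0)) * inverse (qpoch c)"
    unfolding Suc.IH by (simp add: power_add mult.assoc)
  also have "(if d then c else 0) + (if d then c * (c - 1) div 2 else 0) = (if d then Suc c * c div 2 else 0)"
    by (cases c) auto
  finally have "?F * ?u = fps_X ^ (if d then Suc c * c div 2 else 0) * inverse (qpoch c)" .
  moreover have "?u * inverse ?u = 1"
    by (rule inverse_mult_eq_1') simp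
  ultimately have "?F = fps_X ^ (if d then Suc c * c div 2 else 0) * inverse (qpoch c) * inverse ?u"
    by (metis mult.assoc mult_1_right)
  then show ?case
    by (simp add: qpoch_Suc fps_inverse_mult mult.assoc)
qed

lemma
  assumes "finite I"
  shows count_fps_PiE_part_msets: "count_fps (PiE I (\<lambda>c. part_msets (d c) (a c))) (\<lambda>W. \<Sum>c\<in>I. sum_mset (W c)) =
      fps_X ^ (\<Sum>c\<in>I. if d c then a c * (a c - 1) div 2 else 0) * (\<Prod>c\<in>I. inverse (qpoch (a c)))"
    and finite_fibres_PiE_part_msets: "finite_fibres (PiE I (\<lambda>c. part_msets (d c) (a c))) (\<lambda>W. \<Sum>c\<in>I. sum_mset (W c))"
proof -
  note PiE = count_fps_PiE[OF assms, of "\<lambda>c. part_msets (d c) (a c)" "\<lambda>_. sum_mset"]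
  show "finite_fibres (PiE I (\<lambda>c. part_msets (d c) (a c))) (\<lambda>W. \<Sum>c\<in>I. sum_mset (W c))"
    using PiE finite_fibres_part_msets by simp
  have "(\<Prod>c\<in>I. count_fps (part_msets (d c) (a c)) sum_mset) =
      fps_X ^ (\<Sum>c\<in>I. if d c then a c * (a c - 1) div 2 else 0) * (\<Prod>c\<in>I. inverse (qpoch (a c)))"
    by (simp add: count_fps_part_msets prod.distrib power_sum)
  then show "count_fps (PiE I (\<lambda>c. part_msets (d c) (a c))) (\<lambda>W. \<Sum>c\<in>I. sum_mset (W c)) =
      fps_X ^ (\<Sum>c\<in>I. if d c then a c * (a c - 1) div 2 else 0) * (\<Prod>c\<in>I. inverse (qpoch (a c)))"
    using PiE finite_fibres_part_msets by simp
qed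

section \<open>Splitting multisets into residue classes\<close>

lemma filter_mset_sum: "filter_mset P (\<Sum>j\<in>J. F j) = (\<Sum>j\<in>J. filter_mset P (F j))"
  by (induction J rule: infinite_finite_induct) simp_all

lemma image_mset_sum: "image_mset g (\<Sum>j\<in>J. F j) = (\<Sum>j\<in>J. image_mset g (F j))"
  by (induction J rule: infinite_finite_induct) simp_all

lemma sum_mset_sum: "sum_mset (\<Sum>j\<in>J. F j) = (\<Sum>j\<in>J. sum_mset (F j :: 'a::comm_monoid_add multiset))"
  by (induction J rule: infinite_finite_induct) simp_all

lemma sum_filter_mset_classes:
  assumes "\<And>v. v \<in># L \<Longrightarrow> cls v < (N::nat)"
  shows "(\<Sum>i<N. filter_mset (\<lambda>v. cls v = i) L) = L"
proof (rule multiset_eqI)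
  fix x
  have "count (\<Sum>i<N. filter_mset (\<lambda>v. cls v = i) L) x = (\<Sum>i<N. if cls x = i then count L x else 0)"
    by (simp add: count_sum)
  also have "\<dots> = count L x"
    using assms[of x] by (auto simp: not_in_iff[symmetric])
  finally show "count (\<Sum>i<N. filter_mset (\<lambda>v. cls v = i) L) x = count L x" .
qed

lemma sum_mset_affine: "(\<Sum>t\<in>#W. A + int t) = int (size W) * A + int (sum_mset W)"
  by (induction W) (simp_all add: algebra_simps)

locale residue_classes =
  fixes N :: nat and D :: "nat set" and cls lvl base :: "nat \<Rightarrow> nat"
  assumes decompose: "\<And>v. v \<in> D \<Longrightarrow> cls v < N \<and> base (cls v) + N * lvl v = v"
    and compose: "\<And>c t. c < N \<Longrightarrow> base c + N * t \<in> D \<and> cls (base c + N * t) = c \<and> lvl (base c + N * t) = t"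
begin

definition split_classes :: "nat multiset \<Rightarrow> nat \<Rightarrow> nat multiset" where
  "split_classes L = (\<lambda>c\<in>{..<N}. image_mset lvl (filter_mset (\<lambda>v. cls v = c) L))"

definition join_classes :: "(nat \<Rightarrow> nat multiset) \<Rightarrow> nat multiset" where
  "join_classes W = (\<Sum>c<N. image_mset (\<lambda>t. base c + N * t) (W c))"

lemma join_split_classes:
  assumes L: "set_mset L \<subseteq> D"
  shows "join_classes (split_classes L) = L"
proof -
  have "join_classes (split_classes L) =
      (\<Sum>c<N. image_mset (\<lambda>v. base c + N * lvl v) (filter_mset (\<lambda>v. cls v = c) L))"
    unfolding join_classes_def split_classes_def by (simp add: multiset.map_comp o_def)
  also have "\<dots> = (\<Sum>c<N. image_mset id (filter_mset (\<lambda>v. cls v = c) L))"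
    by (intro sum.cong refl image_mset_cong) (use L decompose in auto)
  also have "\<dots> = L"
    by (simp add: sum_filter_mset_classes decompose subsetD[OF L])
  finally show ?thesis .
qed

lemma filter_join_classes:
  assumes "c < N"
  shows "filter_mset (\<lambda>v. cls v = c) (join_classes W) = image_mset (\<lambda>t. base c + N * t) (W c)"
proof -
  have "filter_mset (\<lambda>v. cls v = c) (join_classes W) =
      (\<Sum>c'<N. image_mset (\<lambda>t. base c' + N * t) (filter_mset (\<lambda>t. cls (base c' + N * t) = c) (W c')))"
    unfolding join_classes_def by (simp add: filter_mset_sum filter_mset_image_mset)
  also have "\<dots> = (\<Sum>c'<N. if c' = c then image_mset (\<lambda>t. base c' + N * t) (W c') else {#})"
    by (intro sum.cong refl) (simp add: compose cong: filter_mset_cong)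
  finally show ?thesis
    using assms by (simp add: sum.delta')
qed

lemma split_join_classes:
  assumes "W \<in> extensional {..<N}"
  shows "split_classes (join_classes W) = W"
proof
  fix c
  show "split_classes (join_classes W) c = W c"
  proof (cases "c < N")
    case True
    then show ?thesis
      by (simp add: split_classes_def filter_join_classes multiset.map_comp o_def compose)
  next
    case False
    then show ?thesis using assms by (simp add: split_classes_def extensional_def)
  qed
qed

lemma set_mset_join_classes: "set_mset (join_classes W) \<subseteq> D"
  unfolding join_classes_def set_mset_sum[OF finite_lessThan] using compose by auto

lemma split_classes_extensional: "split_classes L \<in> extensional {..<N}"
  by (simp add: split_classes_def)

lemma size_split_classes: "c < N \<Longrightarrow> size (split_classes L c) = size (filter_mset (\<lambda>v. cls v = c) L)"
  by (simp add: split_classes_def)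

lemma sum_size_classes:
  assumes "set_mset L \<subseteq> D"
  shows "(\<Sum>c<N. size (filter_mset (\<lambda>v. cls v = c) L)) = size L"
  using sum_filter_mset_classes[of L cls N] assms decompose
  by (metis size_multiset_sum subsetD)

lemma count_split_classes:
  assumes L: "set_mset L \<subseteq> D" and c: "c < N"
  shows "count (split_classes L c) t = count L (base c + N * t)"
proof -
  have "count L (base c + N * t) = count (filter_mset (\<lambda>v. cls v = c) L) (base c + N * t)"
    using compose[OF c] by simp
  also have "\<dots> = count (image_mset (\<lambda>t. base c + N * t) (split_classes L c)) (base c + N * t)"
    using filter_join_classes[OF c, of "split_classes L"] join_split_classes[OF L] by simp
  also have "\<dots> = count (split_classes L c) t"
    by (rule count_image_mset_inj) (use c in \<open>simp add: inj_def\<close>)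
  finally show ?thesis by simp
qed

lemma sum_mset_split_classes:
  assumes "set_mset L \<subseteq> D"
  shows "sum_mset (image_mset g L) =
    (\<Sum>c<N. sum_mset (image_mset (\<lambda>t. g (base c + N * t)) (split_classes L c)))"
proof -
  have "sum_mset (image_mset g L) = sum_mset (image_mset g (join_classes (split_classes L)))"
    using join_split_classes[OF assms] by simp
  then show ?thesis
    unfolding join_classes_def by (simp add: image_mset_sum sum_mset_sum multiset.map_comp o_def)
qed

lemma sum_mset_classes_affine:
  assumes "set_mset L \<subseteq> D" and f: "\<And>c t. c < N \<Longrightarrow> f (base c + N * t) = f (base c) + int t"
  shows "(\<Sum>v\<in>#L. f v) =
    (\<Sum>c<N. int (size (split_classes L c)) * f (base c) + int (sum_mset (split_classes L c)))"
proof -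
  have "(\<Sum>v\<in>#L. f v) = (\<Sum>c<N. \<Sum>t\<in>#split_classes L c. f (base c) + int t)"
    unfolding sum_mset_split_classes[OF assms(1)] by (intro sum.cong refl) (simp add: f cong: image_mset_cong)
  then show ?thesis by (simp add: sum_mset_affine)
qed

lemma split_classes_in_PiE_iff:
  assumes L: "set_mset L \<subseteq> D" and rep: "\<And>v. v \<in> D \<Longrightarrow> rep v = rep (base (cls v))"
  shows "split_classes L \<in> PiE {..<N} (\<lambda>c. part_msets (\<not> rep (base c)) (a c)) \<longleftrightarrow>
    (\<forall>c<N. size (filter_mset (\<lambda>v. cls v = c) L) = a c) \<and> (\<forall>v\<in>D. \<not> rep v \<longrightarrow> count L v \<le> 1)"
proof -
  have "split_classes L \<in> PiE {..<N} (\<lambda>c. part_msets (\<not> rep (base c)) (a c)) \<longleftrightarrow>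
      (\<forall>c<N. split_classes L c \<in> part_msets (\<not> rep (base c)) (a c))"
    using split_classes_extensional by (auto simp: PiE_iff)
  also have "\<dots> \<longleftrightarrow> (\<forall>c<N. size (filter_mset (\<lambda>v. cls v = c) L) = a c) \<and>
      (\<forall>c<N. \<not> rep (base c) \<longrightarrow> (\<forall>t. count L (base c + N * t) \<le> 1))"
    by (auto simp: part_msets_def size_split_classes count_split_classes[OF L])
  also have "(\<forall>c<N. \<not> rep (base c) \<longrightarrow> (\<forall>t. count L (base c + N * t) \<le> 1)) \<longleftrightarrow>
      (\<forall>v\<in>D. \<not> rep v \<longrightarrow> count L v \<le> 1)"
  proof safe
    fix v assume "\<forall>c<N. \<not> rep (base c) \<longrightarrow> (\<forall>t. count L (base c + N * t) \<le> 1)" "v \<in> D" "\<not> rep v"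
    then show "count L v \<le> 1"
      using decompose[of v] rep[of v] by metis
  next
    fix c t assume "\<forall>v\<in>D. \<not> rep v \<longrightarrow> count L v \<le> 1" "c < N" "\<not> rep (base c)"
    then show "count L (base c + N * t) \<le> 1"
      using compose[of c t] rep[of "base c + N * t"] by metis
  qed
  finally show ?thesis .
qed

end

section \<open>Decreasing sequences with restricted repetitions\<close>

definition desc_rep :: "(nat \<Rightarrow> bool) \<Rightarrow> nat \<Rightarrow> nat \<Rightarrow> bool" where
  "desc_rep g x y \<longleftrightarrow> y < x \<or> (y = x \<and> g x)"

lemma transp_desc_rep: "transp (desc_rep g)"
  by (auto simp: transp_def desc_rep_def)

lemma sorted_wrt_desc_rep_iff:
  "sorted_wrt (desc_rep g) xs \<longleftrightarrow> sorted_wrt (\<ge>) xs \<and> (\<forall>v. \<not> g v \<longrightarrow> count (mset xs) v \<le> 1)"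
proof (induction xs)
  case (Cons x xs)
  have "(\<forall>y\<in>set xs. desc_rep g x y) \<longleftrightarrow> (\<forall>y\<in>set xs. y \<le> x) \<and> (\<not> g x \<longrightarrow> x \<notin> set xs)"
    by (auto simp: desc_rep_def order.order_iff_strict)
  moreover have "(\<forall>v. \<not> g v \<longrightarrow> count (mset (x # xs)) v \<le> 1) \<longleftrightarrow>
      (\<forall>v. \<not> g v \<longrightarrow> count (mset xs) v \<le> 1) \<and> (\<not> g x \<longrightarrow> x \<notin> set xs)"
  proof (intro iffI conjI allI impI)
    fix v assume "\<forall>v. \<not> g v \<longrightarrow> count (mset (x # xs)) v \<le> 1" "\<not> g v"
    then show "count (mset xs) v \<le> 1"
      by (metis count_add_mset le_SucI le_antisym linorder_le_cases mset.simps(2) not_less_eq_eq)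
  next
    assume "\<forall>v. \<not> g v \<longrightarrow> count (mset (x # xs)) v \<le> 1" "\<not> g x"
    then have "count (mset xs) x = 0" by auto
    then show "x \<notin> set xs" by (simp add: count_eq_zero_iff)
  next
    fix v assume "(\<forall>v. \<not> g v \<longrightarrow> count (mset xs) v \<le> 1) \<and> (\<not> g x \<longrightarrow> x \<notin> set xs)" "\<not> g v"
    then show "count (mset (x # xs)) v \<le> 1"
      by (cases "v = x") (simp_all add: count_eq_zero_iff)
  qed
  ultimately show ?case
    using Cons.IH by auto
qed simp

lemma sorted_wrt_ge_mset_eq:
  fixes xs ys :: "'a::linorder list"
  assumes "sorted_wrt (\<ge>) xs" "sorted_wrt (\<ge>) ys" "mset xs = mset ys"
  shows "xs = ys"
proof -
  have "sorted (rev xs)" "sorted (rev ys)"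
    using assms(1,2) by (simp_all add: sorted_wrt_rev)
  then have "rev xs = rev ys"
    using assms(3) by (metis mset_rev properties_for_sort sorted_sort_id)
  then show ?thesis by simp
qed

lemma nth_default_antimono:
  assumes "sorted_wrt (desc_rep g) xs"
  shows "nth_default 0 xs (Suc j) \<le> nth_default 0 xs j"
    and "nth_default 0 xs (Suc j) = nth_default 0 xs j \<Longrightarrow> Suc j < length xs \<Longrightarrow> g (xs ! j)"
  using sorted_wrt_nth_less[OF assms, of j "Suc j"]
  by (auto simp: nth_default_def desc_rep_def)

lemma nonzero_iff_less_card_support:
  fixes f :: "nat \<Rightarrow> nat"
  assumes "\<And>j. f (Suc j) \<le> f j" "finite {j. f j \<noteq> 0}"
  shows "f j \<noteq> 0 \<longleftrightarrow> j < card {j. f j \<noteq> 0}"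
proof -
  have down: "f i \<noteq> 0" if "i \<le> j" "f j \<noteq> 0" for i j
    using lift_Suc_antimono_le[of f i j] assms(1) that by auto
  show ?thesis
  proof
    assume "f j \<noteq> 0"
    then have "{..j} \<subseteq> {j. f j \<noteq> 0}" using down by auto
    then have "card {..j} \<le> card {j. f j \<noteq> 0}" using assms(2) by (rule card_mono[rotated])
    then show "j < card {j. f j \<noteq> 0}" by simp
  next
    assume j: "j < card {j. f j \<noteq> 0}"
    show "f j \<noteq> 0"
    proof
      assume "f j = 0"
      then have "{j. f j \<noteq> 0} \<subseteq> {..<j}"
        using down[of j] by (auto simp: not_less[symmetric])
      then have "card {j. f j \<noteq> 0} \<le> j"
        using card_mono[of "{..<j}"] by fastforce
      with j show False by simp
    qed
  qed
qed

section \<open>Triples as pairs of multisets\<close>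

lemma bij_betw_via_image:
  assumes "bij_betw g A C" "B = f ` A" "\<And>a. a \<in> A \<Longrightarrow> h (f a) = g a"
  shows "bij_betw h B C"
proof -
  have "inj_on h B"
  proof (rule inj_onI)
    fix b b' assume "b \<in> B" "b' \<in> B" "h b = h b'"
    then obtain a a' where "a \<in> A" "a' \<in> A" "b = f a" "b' = f a'" "g a = g a'"
      using assms(2,3) by auto
    then show "b = b'"
      using assms(1) by (auto simp: bij_betw_def dest: inj_onD)
  qed
  moreover have "h ` B = g ` A"
    unfolding assms(2) image_comp by (rule image_cong) (simp_all add: assms(3))
  moreover have "g ` A = C"
    using assms(1) by (simp add: bij_betw_def)
  ultimately show ?thesis by (simp add: bij_betw_def)
qed

definition mset_pairs :: "(int \<Rightarrow> int) \<Rightarrow> nat \<Rightarrow> nat \<Rightarrow> (nat multiset \<times> nat multiset) set" where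
  "mset_pairs s k r = {(Lm, M). 0 \<notin># Lm \<and> size M = size Lm + r \<and>
     (\<forall>v. s (int k + int v) \<noteq> s (int k) \<longrightarrow> count Lm v \<le> 1) \<and>
     (\<forall>v. s (int k - int v) \<noteq> s (int k) \<longrightarrow> count M v \<le> 1)}"

definition to_msets :: "(nat \<Rightarrow> nat) \<times> nat list \<times> (nat \<Rightarrow> nat) \<Rightarrow> nat multiset \<times> nat multiset" where
  "to_msets x = (case x of (lam, nu, mu) \<Rightarrow>
     (mset (map lam [0..<card {j. lam j \<noteq> 0}]), mset nu + mset (map mu [0..<card {j. lam j \<noteq> 0}])))"

definition mset_pair_wt :: "nat \<Rightarrow> nat \<Rightarrow> nat multiset \<times> nat multiset \<Rightarrow> nat \<Rightarrow> int" where
  "mset_pair_wt N k P i = (case P of (Lm, M) \<Rightarrow>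
     (\<Sum>v\<in>#Lm. upexp N (int k) v i) + (\<Sum>v\<in>#M. downexp N (int k) v i))"

definition pad_triple :: "nat list \<times> nat list \<times> nat list \<Rightarrow> (nat \<Rightarrow> nat) \<times> nat list \<times> (nat \<Rightarrow> nat)" where
  "pad_triple t = (case t of (ls, nu, ms) \<Rightarrow> (nth_default 0 ls, nu, nth_default 0 ms))"

definition mset_triple :: "nat list \<times> nat list \<times> nat list \<Rightarrow> nat multiset \<times> nat multiset" where
  "mset_triple t = (case t of (ls, nu, ms) \<Rightarrow> (mset ls, mset (nu @ ms)))"

lemma support_nth_default:
  assumes "0 \<notin> set xs"
  shows "{j. nth_default 0 xs j \<noteq> 0} = {..<length xs}"
proof -
  have "xs ! j \<noteq> 0" if "j < length xs" for j
    using assms nth_mem[OF that] by auto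
  then show ?thesis by (auto simp: nth_default_def)
qed

lemma nth_default_eq_0_iff:
  assumes "0 \<notin> set xs"
  shows "nth_default 0 xs j = 0 \<longleftrightarrow> length xs \<le> j"
proof (cases "j < length xs")
  case True
  then have "xs ! j \<noteq> 0"
    using assms nth_mem by force
  with True show ?thesis by (simp add: nth_default_def)
qed (simp add: nth_default_def)

lemma sum_support_nth_default:
  fixes f :: "nat \<Rightarrow> 'a::comm_monoid_add"
  assumes "f 0 = 0"
  shows "(\<Sum>j\<in>{j. nth_default 0 xs j \<noteq> 0}. f (nth_default 0 xs j)) = (\<Sum>j<length xs. f (xs ! j))"
proof -
  have "(\<Sum>j\<in>{j. nth_default 0 xs j \<noteq> 0}. f (nth_default 0 xs j)) = (\<Sum>j<length xs. f (nth_default 0 xs j))"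
    by (rule sum.mono_neutral_left) (use assms in \<open>auto simp: nth_default_def intro: gr0I\<close>)
  then show ?thesis by (simp add: nth_default_nth)
qed

lemma sum_mset_mset_conv_sum_nth: "(\<Sum>v\<in>#mset xs. f v) = (\<Sum>j<length xs. f (xs ! j))"
  by (simp add: sum_mset_sum_list sum_list_sum_nth atLeast0LessThan flip: mset_map)

lemma sorted_wrt_ge_rev_sorted_list_of_multiset: "sorted_wrt (\<ge>) (rev (sorted_list_of_multiset M))"
  by (simp add: sorted_wrt_rev)

lemma sorted_wrt_map_upt_desc_rep:
  assumes "\<And>j. Suc j < L \<Longrightarrow> desc_rep g (f j) (f (Suc j))"
  shows "sorted_wrt (desc_rep g) (map f [0..<L])"
  unfolding sorted_wrt_iff_nth_Suc_transp[OF transp_desc_rep] using assms by simp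

lemma PkD:
  assumes "(lam, mu) \<in> Pk N s k \<epsilon>"
  shows "lam (Suc j) \<le> lam j" "mu (Suc j) \<le> mu j" "finite {j. lam j \<noteq> 0}" "lam j = 0 \<Longrightarrow> mu j = 0"
    and "lam j = lam (Suc j) \<Longrightarrow> s (k + int (lam j)) = \<epsilon> \<or> lam j = 0 \<and> mu j = 0"
    and "mu j = mu (Suc j) \<Longrightarrow> s (k - int (mu j)) = \<epsilon> \<or> mu j = 0 \<and> lam (Suc j) = 0"
  using assms by (simp_all add: Pk_def)

lemma
  assumes "(lam, mu) \<in> Pk N s k \<epsilon>"
  shows Pk_support: "lam j \<noteq> 0 \<longleftrightarrow> j < card {j. lam j \<noteq> 0}"
    and Pk_support_mu: "card {j. lam j \<noteq> 0} \<le> j \<Longrightarrow> mu j = 0"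
proof -
  show supp: "lam j \<noteq> 0 \<longleftrightarrow> j < card {j. lam j \<noteq> 0}" for j
    by (rule nonzero_iff_less_card_support) (use PkD[OF assms] in simp_all)
  show "card {j. lam j \<noteq> 0} \<le> j \<Longrightarrow> mu j = 0"
    using PkD(4)[OF assms, of j] supp[of j] by (meson leD)
qed

lemma Pk_desc_rep:
  assumes "(lam, mu) \<in> Pk N s k \<epsilon>" "Suc j < card {j. lam j \<noteq> 0}"
  shows "desc_rep (\<lambda>v. s (k + int v) = \<epsilon>) (lam j) (lam (Suc j))"
    and "desc_rep (\<lambda>v. s (k - int v) = \<epsilon>) (mu j) (mu (Suc j))"
proof -
  have "lam (Suc j) \<noteq> 0"
    using Pk_support[OF assms(1), of "Suc j"] assms(2) by blast
  then show "desc_rep (\<lambda>v. s (k + int v) = \<epsilon>) (lam j) (lam (Suc j))"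
    "desc_rep (\<lambda>v. s (k - int v) = \<epsilon>) (mu j) (mu (Suc j))"
    using PkD(1,2,5,6)[OF assms(1), of j] unfolding desc_rep_def by (auto simp: order.order_iff_strict)
qed

lemma nth_default_in_Pk:
  assumes "0 \<notin> set ls" "length ms = length ls"
    and lam_sorted: "sorted_wrt (desc_rep (\<lambda>v. s (k + int v) = \<epsilon>)) ls"
    and mu_sorted: "sorted_wrt (desc_rep (\<lambda>v. s (k - int v) = \<epsilon>)) ms"
  shows "(nth_default 0 ls, nth_default 0 ms) \<in> Pk N s k \<epsilon>"
proof -
  let ?lam = "nth_default 0 ls" and ?mu = "nth_default 0 ms"
  have lam0: "?lam j = 0 \<longleftrightarrow> length ls \<le> j" for j
    by (rule nth_default_eq_0_iff[OF assms(1)])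
  have mu0: "length ls \<le> j \<Longrightarrow> ?mu j = 0" for j
    using assms(2) by (simp add: nth_default_beyond)
  show ?thesis
    unfolding Pk_def
  proof (intro CollectI case_prodI conjI allI impI)
    fix j
    show "?lam (Suc j) \<le> ?lam j" "?mu (Suc j) \<le> ?mu j"
      by (rule nth_default_antimono(1)[OF lam_sorted], rule nth_default_antimono(1)[OF mu_sorted])
    show "?lam j = 0 \<Longrightarrow> ?mu j = 0"
      using lam0 mu0 by blast
    show "s (k + int (?lam j)) = \<epsilon> \<or> ?lam j = 0 \<and> ?mu j = 0" if "?lam j = ?lam (Suc j)"
    proof (cases "Suc j < length ls")
      case True
      have "s (k + int (ls ! j)) = \<epsilon>"
        using nth_default_antimono(2)[OF lam_sorted that[symmetric] True] .
      with True show ?thesis by (simp add: nth_default_nth)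
    next
      case False
      then have "?lam j = 0" using that lam0 by simp
      with lam0 mu0 show ?thesis by blast
    qed
    show "s (k - int (?mu j)) = \<epsilon> \<or> ?mu j = 0 \<and> ?lam (Suc j) = 0" if "?mu j = ?mu (Suc j)"
    proof (cases "Suc j < length ls")
      case True
      have "s (k - int (ms ! j)) = \<epsilon>"
        using nth_default_antimono(2)[OF mu_sorted that[symmetric]] True assms(2) by simp
      with True assms(2) show ?thesis by (simp add: nth_default_nth)
    next
      case False
      then have "?lam (Suc j) = 0" "?mu (Suc j) = 0" using lam0 mu0 by simp_all
      with that show ?thesis by simp
    qed
  qed (rule finite_nth_default_neq_default)+
qed

locale rset_setup =
  fixes N :: nat and s :: "int \<Rightarrow> int" and k r :: nat
  assumes r_pos: "0 < r"
begin

abbreviation lam_rep :: "nat \<Rightarrow> bool" where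
  "lam_rep v \<equiv> s (int k + int v) = s (int k)"

abbreviation mu_rep :: "nat \<Rightarrow> bool" where
  "mu_rep v \<equiv> s (int k - int v) = s (int k)"

text \<open>The conditions of \<open>R\<close> linking \<open>\<nu>\<close> to \<open>\<mu>\<close> say that \<open>\<nu> @ \<mu>\<close> is sorted.\<close>

definition list_triples :: "(nat list \<times> nat list \<times> nat list) set" where
  "list_triples = {(ls, nu, ms). 0 \<notin> set ls \<and> length ms = length ls \<and> length nu = r \<and>
     sorted_wrt (desc_rep lam_rep) ls \<and> sorted_wrt (desc_rep mu_rep) (nu @ ms)}"

lemma RsetD:
  assumes "(lam, nu, mu) \<in> Rset N s k r"
  shows "(lam, mu) \<in> Pk N s (int k) (s (int k))" "length nu = r"
    and "\<And>j. Suc j < r \<Longrightarrow> desc_rep mu_rep (nu ! j) (nu ! Suc j)"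
    and "desc_rep mu_rep (nu ! (r - 1)) (mu 0)"
  using assms by (auto simp: Rset_def desc_rep_def order.order_iff_strict)

lemma Rset_sorted_nu_mu:
  assumes x: "(lam, nu, mu) \<in> Rset N s k r"
  shows "sorted_wrt (desc_rep mu_rep) (nu @ map mu [0..<card {j. lam j \<noteq> 0}])"
proof -
  define L where "L = card {j. lam j \<noteq> 0}"
  have "nu @ map mu [0..<L] = map (\<lambda>j. if j < r then nu ! j else mu (j - r)) [0..<r + L]"
    by (rule nth_equalityI) (auto simp: nth_append RsetD(2)[OF x])
  also have "sorted_wrt (desc_rep mu_rep) \<dots>"
  proof (rule sorted_wrt_map_upt_desc_rep)
    fix j assume j: "Suc j < r + L"
    consider "Suc j < r" | "Suc j = r" | "r < Suc j" by linarith
    then show "desc_rep mu_rep (if j < r then nu ! j else mu (j - r))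
        (if Suc j < r then nu ! Suc j else mu (Suc j - r))"
    proof cases
      case 3
      then have "Suc (j - r) < L" "Suc j - r = Suc (j - r)" using j by auto
      then show ?thesis
        using 3 Pk_desc_rep(2)[OF RsetD(1)[OF x], of "j - r"] by (simp add: L_def)
    qed (use RsetD(3,4)[OF x] in auto)
  qed
  finally show ?thesis by (simp add: L_def)
qed

lemma Rset_imp_pad_triple:
  assumes x: "x \<in> Rset N s k r"
  shows "\<exists>t\<in>list_triples. x = pad_triple t"
proof -
  obtain lam nu mu where x_eq: "x = (lam, nu, mu)" by (cases x)
  note P = RsetD(1)[OF x[unfolded x_eq]]
  define L where "L = card {j. lam j \<noteq> 0}"
  have nonzero: "lam j \<noteq> 0 \<longleftrightarrow> j < L" for j
    unfolding L_def by (rule Pk_support[OF P])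
  have mu_zero: "L \<le> j \<Longrightarrow> mu j = 0" for j
    unfolding L_def by (rule Pk_support_mu[OF P])
  have lam_eq: "lam = nth_default 0 (map lam [0..<L])"
  proof
    fix j show "lam j = nth_default 0 (map lam [0..<L]) j"
      using nonzero[of j] by (cases "j < L") (simp_all add: nth_default_def)
  qed
  have mu_eq: "mu = nth_default 0 (map mu [0..<L])"
  proof
    fix j show "mu j = nth_default 0 (map mu [0..<L]) j"
      using mu_zero[of j] by (cases "j < L") (simp_all add: nth_default_def)
  qed
  have mem: "(map lam [0..<L], nu, map mu [0..<L]) \<in> list_triples"
    unfolding list_triples_def
  proof (intro CollectI case_prodI conjI)
    show "0 \<notin> set (map lam [0..<L])"
    proof
      assume "0 \<in> set (map lam [0..<L])"
      then obtain j where "j < L" "lam j = 0" by auto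
      with nonzero show False by blast
    qed
    show "sorted_wrt (desc_rep lam_rep) (map lam [0..<L])"
      by (rule sorted_wrt_map_upt_desc_rep) (use Pk_desc_rep(1)[OF P] in \<open>simp add: L_def\<close>)
    show "sorted_wrt (desc_rep mu_rep) (nu @ map mu [0..<L])"
      using Rset_sorted_nu_mu[OF x[unfolded x_eq]] by (simp add: L_def)
  qed (simp_all add: RsetD(2)[OF x[unfolded x_eq]])
  show ?thesis
    unfolding x_eq pad_triple_def by (rule bexI[OF _ mem]) (simp only: prod.case flip: lam_eq mu_eq)
qed

lemma pad_triple_in_Rset:
  assumes "t \<in> list_triples"
  shows "pad_triple t \<in> Rset N s k r"
proof -
  obtain ls nu ms where t: "t = (ls, nu, ms)" and ls: "0 \<notin> set ls" "sorted_wrt (desc_rep lam_rep) ls"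
    and lens: "length ms = length ls" "length nu = r" and nu_ms: "sorted_wrt (desc_rep mu_rep) (nu @ ms)"
    using assms by (auto simp: list_triples_def)
  have nu_step: "desc_rep mu_rep (nu ! j) (nu ! Suc j)" if "Suc j < r" for j
    using sorted_wrt_nth_less[OF nu_ms, of j "Suc j"] that lens by (simp add: nth_append)
  have nu_mu: "desc_rep mu_rep (nu ! (r - 1)) (nth_default 0 ms 0)"
  proof (cases ms)
    case Nil
    then show ?thesis by (cases "nu ! (r - 1) = 0") (simp_all add: desc_rep_def)
  next
    case (Cons m ms')
    have "nu ! (r - 1) \<in> set nu" using lens r_pos by simp
    with nu_ms Cons show ?thesis by (simp add: sorted_wrt_append)
  qed
  have "(nth_default 0 ls, nth_default 0 ms) \<in> Pk N s (int k) (s (int k))"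
    using nth_default_in_Pk[OF ls(1) lens(1) ls(2)] nu_ms by (simp add: sorted_wrt_append)
  then show ?thesis
    unfolding t pad_triple_def Rset_def prod.case
  proof (intro CollectI case_prodI conjI allI impI)
    fix j assume "Suc j < r"
    then show "nu ! Suc j \<le> nu ! j" "nu ! Suc j = nu ! j \<Longrightarrow> mu_rep (nu ! j)"
      using nu_step[of j] by (auto simp: desc_rep_def)
  next
    show "nth_default 0 ms 0 \<le> nu ! (r - 1)"
      "nu ! (r - 1) = nth_default 0 ms 0 \<Longrightarrow> mu_rep (nth_default 0 ms 0)"
      using nu_mu by (auto simp: desc_rep_def)
  qed (use lens in simp_all)
qed

lemma Rset_eq_pad_triples: "Rset N s k r = pad_triple ` list_triples"
  using Rset_imp_pad_triple pad_triple_in_Rset by blast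

lemma to_msets_pad_triple:
  assumes "t \<in> list_triples"
  shows "to_msets (pad_triple t) = mset_triple t"
proof -
  obtain ls nu ms where t: "t = (ls, nu, ms)" "0 \<notin> set ls" "length ms = length ls"
    using assms by (auto simp: list_triples_def)
  then have "map (nth_default 0 ms) [0..<length ls] = ms"
    by (metis map_nth_default)
  then show ?thesis
    unfolding t(1) to_msets_def pad_triple_def mset_triple_def prod.case support_nth_default[OF t(2)]
    by (simp add: map_nth_default)
qed

lemma bij_betw_mset_triple: "bij_betw mset_triple list_triples (mset_pairs s k r)"
proof -
  define desc where "desc M = rev (sorted_list_of_multiset M)" for M :: "nat multiset"
  have mset_desc [simp]: "mset (desc M) = M" and length_desc [simp]: "length (desc M) = size M"
    and set_desc [simp]: "set (desc M) = set_mset M" for M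
    by (simp_all add: desc_def flip: size_mset)
  have desc_mset: "desc (mset xs) = xs" if "sorted_wrt (desc_rep g) xs" for g xs
    unfolding desc_def using that
    by (intro sorted_wrt_ge_mset_eq) (simp_all add: sorted_wrt_rev sorted_wrt_desc_rep_iff)
  have sorted_desc: "sorted_wrt (desc_rep g) (desc M) \<longleftrightarrow> (\<forall>v. \<not> g v \<longrightarrow> count M v \<le> 1)" for g M
    using sorted_wrt_ge_rev_sorted_list_of_multiset[of M] by (simp add: desc_def sorted_wrt_desc_rep_iff)
  show ?thesis
  proof (rule bij_betw_byWitness[where f' = "\<lambda>(Lm, M). (desc Lm, take r (desc M), drop r (desc M))"])
    show "\<forall>t\<in>list_triples. (\<lambda>(Lm, M). (desc Lm, take r (desc M), drop r (desc M))) (mset_triple t) = t"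
      by (auto simp: list_triples_def mset_triple_def desc_mset simp flip: mset_append)
    show "\<forall>P\<in>mset_pairs s k r. mset_triple ((\<lambda>(Lm, M). (desc Lm, take r (desc M), drop r (desc M))) P) = P"
      by (auto simp: mset_triple_def simp flip: mset_append)
    show "mset_triple ` list_triples \<subseteq> mset_pairs s k r"
      by (auto simp: list_triples_def mset_triple_def mset_pairs_def sorted_wrt_desc_rep_iff)
    show "(\<lambda>(Lm, M). (desc Lm, take r (desc M), drop r (desc M))) ` mset_pairs s k r \<subseteq> list_triples"
      by (auto simp: list_triples_def mset_pairs_def sorted_desc)
  qed
qed

lemma bij_betw_to_msets: "bij_betw to_msets (Rset N s k r) (mset_pairs s k r)"
  by (rule bij_betw_via_image[OF bij_betw_mset_triple Rset_eq_pad_triples to_msets_pad_triple])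

lemma wtR_pad_triple:
  assumes "t \<in> list_triples"
  shows "wtR N k (pad_triple t) = mset_pair_wt N k (mset_triple t)"
proof
  fix i
  obtain ls nu ms where t: "t = (ls, nu, ms)" "0 \<notin> set ls"
    using assms by (auto simp: list_triples_def)
  have zero: "downexp N (int k) 0 i = 0"
    by (simp add: downexp_def)
  show "wtR N k (pad_triple t) i = mset_pair_wt N k (mset_triple t) i"
    unfolding t(1) wtR_def wtk_def pad_triple_def mset_triple_def mset_pair_wt_def prod.case
      support_nth_default[OF t(2)] sum_support_nth_default[of "\<lambda>v. downexp N (int k) v i", OF zero]
    by (simp add: sum_mset_mset_conv_sum_nth nth_default_nth)
qed

lemma wtR_eq_mset_pair_wt:
  assumes "x \<in> Rset N s k r"
  shows "wtR N k x = mset_pair_wt N k (to_msets x)"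
proof -
  obtain t where "t \<in> list_triples" "x = pad_triple t"
    using Rset_imp_pad_triple[OF assms] by blast
  then show ?thesis by (simp add: wtR_pad_triple to_msets_pad_triple)
qed

end

section \<open>Exponent vectors of runs of variables\<close>

lemma card_window_residue:
  assumes N: "0 < N"
  shows "card {t::nat. l \<le> t \<and> t < l + N \<and> int t mod int N = \<rho> mod int N} = 1"
proof -
  define m where "m = (\<rho> - int l) mod int N"
  have m0: "0 \<le> m" "m < int N" unfolding m_def using N by simp_all
  have "{t::nat. l \<le> t \<and> t < l + N \<and> int t mod int N = \<rho> mod int N} = {l + nat m}"
  proof (rule set_eqI, rule iffI)
    fix t assume "t \<in> {t::nat. l \<le> t \<and> t < l + N \<and> int t mod int N = \<rho> mod int N}"
    then have t: "l \<le> t" "t < l + N" "int t mod int N = \<rho> mod int N" by auto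
    define x where "x = int t - int l"
    have x0: "0 \<le> x" "x < int N" using t unfolding x_def by auto
    have "int N dvd (int t - \<rho>)" using t(3) by (simp add: mod_eq_dvd_iff)
    then have "int N dvd (x - (\<rho> - int l))" unfolding x_def by (simp add: algebra_simps)
    then have "x mod int N = (\<rho> - int l) mod int N" by (simp add: mod_eq_dvd_iff)
    moreover have "x mod int N = x" using x0 by simp
    ultimately have "x = m" unfolding m_def by simp
    then show "t \<in> {l + nat m}" unfolding x_def using t m0 by auto
  next
    fix t assume "t \<in> {l + nat m}"
    then have t: "t = l + nat m" by simp
    have "int t = int l + m" using t m0 by simp
    moreover have "int N dvd (int l + m - \<rho>)"
    proof -
      have "int N dvd (m - (\<rho> - int l))" unfolding m_def
        using mod_eq_dvd_iff[of "(\<rho> - int l) mod int N" "int N" "\<rho> - int l"] by simp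
      then show ?thesis by (simp add: algebra_simps)
    qed
    ultimately have "int t mod int N = \<rho> mod int N" by (simp add: mod_eq_dvd_iff)
    then show "t \<in> {t::nat. l \<le> t \<and> t < l + N \<and> int t mod int N = \<rho> mod int N}"
      using t m0 by auto
  qed
  then show ?thesis by simp
qed

lemma card_residue_add_period:
  assumes "0 < N" and P: "\<And>t. P t \<longleftrightarrow> int t mod int N = \<rho> mod int N"
  shows "card {t. t < l + N \<and> P t} = card {t. t < l \<and> P t} + 1"
proof -
  have "card {t. t < l + N \<and> P t} = card ({t. t < l \<and> P t} \<union> {t. l \<le> t \<and> t < l + N \<and> P t})"
    by (rule arg_cong[where f = card]) auto
  also have "\<dots> = card {t. t < l \<and> P t} + card {t. l \<le> t \<and> t < l + N \<and> P t}"
    by (rule card_Un_disjoint) auto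
  finally show ?thesis
    unfolding P using card_window_residue[OF assms(1)] by simp
qed

lemma add_mod_eq_iff:
  fixes a :: int
  assumes "i < N"
  shows "(a + int t) mod int N = int i \<longleftrightarrow> int t mod int N = (int i - a) mod int N"
proof -
  have "(a + int t) mod int N = int i \<longleftrightarrow> (a + int t) mod int N = int i mod int N"
    using assms by simp
  also have "\<dots> \<longleftrightarrow> int N dvd (int t - (int i - a))"
    by (simp add: mod_eq_dvd_iff algebra_simps)
  also have "\<dots> \<longleftrightarrow> int t mod int N = (int i - a) mod int N"
    by (simp add: mod_eq_dvd_iff)
  finally show ?thesis .
qed

lemma upexp_add_period:
  assumes "0 < N" "i < N"
  shows "upexp N a (l + N) i = upexp N a l i + 1"
  unfolding upexp_def using card_residue_add_period[OF assms(1) add_mod_eq_iff[OF assms(2)]] by simp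

lemma upexp_add_multiple:
  assumes "0 < N" "i < N"
  shows "upexp N a (l + N * t) i = upexp N a l i + int t"
proof (induction t)
  case (Suc t)
  have "upexp N a (l + N * Suc t) i = upexp N a ((l + N * t) + N) i"
    by (simp add: algebra_simps)
  also have "\<dots> = upexp N a l i + int (Suc t)"
    using Suc upexp_add_period[OF assms] by simp
  finally show ?case .
qed simp

lemma upexp_shift_period: "upexp N (a + int N * m) l i = upexp N a l i"
proof -
  have "(a + int N * m + int t) mod int N = (a + int t) mod int N" for t
  proof -
    have "a + int N * m + int t = (a + int t) + m * int N" by simp
    then show ?thesis by (simp only: mod_mult_self1)
  qed
  then show ?thesis by (simp add: upexp_def)
qed

lemma downexp_eq_upexp: "downexp N a l i = upexp N (a - int l) l i"
proof -
  let ?A = "{t. 1 \<le> t \<and> t \<le> l \<and> (a - int t) mod int N = int i}"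
    and ?B = "{t. t < l \<and> (a - int l + int t) mod int N = int i}"
  have "bij_betw (\<lambda>t. l - t) ?A ?B"
  proof (rule bij_betw_byWitness[where f' = "\<lambda>t. l - t"])
    show "(\<lambda>t. l - t) ` ?A \<subseteq> ?B"
    proof (rule image_subsetI)
      fix t assume "t \<in> ?A"
      moreover have "a - int l + int (l - t) = a - int t" if "t \<le> l"
        using that by (simp add: of_nat_diff)
      ultimately show "l - t \<in> ?B" by auto
    qed
    show "(\<lambda>t. l - t) ` ?B \<subseteq> ?A"
    proof (rule image_subsetI)
      fix t assume "t \<in> ?B"
      then have "t < l" "(a - int l + int t) mod int N = int i" by auto
      then show "l - t \<in> ?A" by (simp add: of_nat_diff algebra_simps)
    qed
  qed auto
  then have "card ?A = card ?B" by (rule bij_betw_same_card)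
  then show ?thesis unfolding downexp_def upexp_def by simp
qed

lemma downexp_add_multiple:
  assumes "0 < N" "i < N"
  shows "downexp N a (l + N * t) i = downexp N a l i + int t"
proof -
  have "downexp N a (l + N * t) i = upexp N ((a - int l) + int N * - int t) (l + N * t) i"
    by (simp add: downexp_eq_upexp algebra_simps)
  also have "\<dots> = upexp N (a - int l) l i + int t"
    by (simp only: upexp_shift_period upexp_add_multiple[OF assms])
  finally show ?thesis by (simp add: downexp_eq_upexp)
qed

lemma upexp_eq_zr: "upexp N (int a) (Suc l) i = zr N a (a + l) i"
proof -
  let ?A = "{t. t < Suc l \<and> (int a + int t) mod int N = int i}"
    and ?B = "{u. a \<le> u \<and> u \<le> a + l \<and> u mod N = i}"
  have "bij_betw (\<lambda>t. a + t) ?A ?B"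
  proof (rule bij_betw_byWitness[where f' = "\<lambda>u. u - a"])
    show "(\<lambda>t. a + t) ` ?A \<subseteq> ?B"
    proof (rule image_subsetI)
      fix t assume t: "t \<in> ?A"
      then have "int ((a + t) mod N) = int i" by (simp add: zmod_int)
      with t show "a + t \<in> ?B" by simp
    qed
    show "(\<lambda>u. u - a) ` ?B \<subseteq> ?A"
    proof (rule image_subsetI)
      fix u assume u: "u \<in> ?B"
      then have "(int a + int (u - a)) mod int N = int i"
        by (simp add: zmod_int[symmetric])
      with u show "u - a \<in> ?A" by auto
    qed
  qed auto
  then have "card ?A = card ?B" by (rule bij_betw_same_card)
  then show ?thesis unfolding upexp_def zr_def by simp
qed

lemma zr_full_period:
  assumes "0 < N" "i < N"
  shows "zr N a (N + a - 1) i = 1"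
proof -
  have "zr N a (N + a - 1) i = upexp N (int a) (0 + N * 1) i"
    using upexp_eq_zr[of N a "N - 1" i] assms(1) by (simp add: add.commute)
  also have "\<dots> = 1"
    by (simp only: upexp_add_multiple[OF assms]) (simp add: upexp_def)
  finally show ?thesis .
qed

lemma upexp_beyond:
  assumes "0 < N" "N \<le> i"
  shows "upexp N a l i = 0"
proof -
  have "(a + int t) mod int N \<noteq> int i" for t
    using assms pos_mod_bound[of "int N" "a + int t"] by linarith
  then show ?thesis by (simp add: upexp_def)
qed

lemma downexp_beyond: "0 < N \<Longrightarrow> N \<le> i \<Longrightarrow> downexp N a l i = 0"
  by (simp add: downexp_eq_upexp upexp_beyond)

lemma sum_card_fibres:
  assumes "finite A" "finite I" "g ` A \<subseteq> I"
  shows "(\<Sum>i\<in>I. card {x\<in>A. g x = i}) = card A"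
proof -
  have "card A = card (\<Union>i\<in>I. {x\<in>A. g x = i})"
    using assms(3) by (intro arg_cong[where f = card]) auto
  also have "\<dots> = (\<Sum>i\<in>I. card {x\<in>A. g x = i})"
    by (rule card_UN_disjoint) (use assms(1,2) in auto)
  finally show ?thesis by simp
qed

lemma sum_upexp:
  assumes "0 < N"
  shows "(\<Sum>i<N. upexp N a l i) = int l"
proof -
  have fibre: "{t. t < l \<and> (a + int t) mod int N = int i} = {t\<in>{..<l}. nat ((a + int t) mod int N) = i}" for i
  proof -
    have "(a + int t) mod int N = int i \<longleftrightarrow> nat ((a + int t) mod int N) = i" for t
      using assms by (metis nat_int int_nat_eq pos_mod_sign of_nat_0_less_iff)
    then show ?thesis by auto
  qed
  have "(\<Sum>i<N. card {t. t < l \<and> (a + int t) mod int N = int i}) = card {..<l}"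
    unfolding fibre by (rule sum_card_fibres) (use assms in \<open>auto simp: nat_less_iff\<close>)
  then show ?thesis
    unfolding upexp_def by (simp flip: of_nat_sum)
qed

lemma sum_downexp: "0 < N \<Longrightarrow> (\<Sum>i<N. downexp N a l i) = int l"
  by (simp add: downexp_eq_upexp sum_upexp)

section \<open>Residue classes of parts\<close>

lemma mod_add_diff_eq_if:
  fixes c k N :: nat
  assumes "c < N" "k < N"
  shows "(c + (N - k)) mod N = (if k \<le> c then c - k else c + N - k)"
proof (cases "k \<le> c")
  case True
  have e: "c + (N - k) = (c - k) + N" using True assms by simp
  have "(c + (N - k)) mod N = (c - k) mod N" unfolding e by simp
  then show ?thesis using True assms by simp
next
  case False
  then show ?thesis using assms by simp
qed

lemma mod_add_diff_eq_if':
  fixes c k N :: nat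
  assumes "c < N" "k < N"
  shows "(k + (N - c)) mod N = (if c \<le> k then k - c else k + N - c)"
  using mod_add_diff_eq_if[OF assms(2,1)] by (simp add: add.commute)

lemma mod_add_diff_involution:
  fixes k w N :: nat
  assumes N: "0 < N" and w: "w < N"
  shows "(k + (N - (k + (N - w)) mod N)) mod N = w"
proof -
  define z where "z = (k + (N - w)) mod N"
  have zN: "z < N" unfolding z_def using N by simp
  have iz: "int z = (int k + int N - int w) mod int N"
    unfolding z_def using w by (simp add: zmod_int of_nat_diff)
  have "int ((k + (N - z)) mod N) = (int k + int N - int z) mod int N"
    using zN by (simp add: zmod_int of_nat_diff)
  also have "\<dots> = (int k + int N - (int k + int N - int w)) mod int N"
    unfolding iz by (rule mod_diff_right_eq)
  also have "\<dots> = int w" using w by simp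
  finally show ?thesis unfolding z_def by simp
qed

lemma periodic_add_multiple:
  assumes "\<forall>i. s (i + int N) = s i"
  shows "s (x + int N * m) = s x"
proof -
  have pos: "s (y + int N * int n) = s y" for y n
  proof (induction n)
    case (Suc n)
    have "s (y + int N * int (Suc n)) = s ((y + int N * int n) + int N)"
      by (simp add: algebra_simps)
    then show ?case using Suc assms by simp
  qed simp
  show ?thesis
  proof (cases "m \<ge> 0")
    case True
    then show ?thesis using pos[of x "nat m"] by simp
  next
    case False
    have "s x = s ((x + int N * m) + int N * int (nat (- m)))" using False by simp
    then show ?thesis using pos[of "x + int N * m" "nat (- m)"] by simp
  qed
qed

locale parity_setup = rset_setup +
  assumes N_pos: "0 < N" and k_less: "k < N"
    and s_periodic: "\<forall>i. s (i + int N) = s i"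
    and s_sign: "\<forall>i. s i = 1 \<or> s i = -1"
begin

text \<open>A part \<open>v > 0\<close> of \<open>\<lambda>\<close> contributes \<open>z_k \<cdots> z_(k+v-1)\<close> and a part \<open>v\<close> of \<open>M\<close>
  contributes \<open>z_(k-v) \<cdots> z_(k-1)\<close>.  Parts are classified by the residue of the last,
  respectively first, index; \<open>lam_base c\<close> and \<open>mu_base c\<close> are the smallest parts in class \<open>c\<close>,
  and \<open>class_index c\<close> is the representative of \<open>c\<close> in \<open>{k..N+k-1}\<close> used on the right-hand side.\<close>

definition lam_cls :: "nat \<Rightarrow> nat" where
  "lam_cls v = (k + v - 1) mod N"

definition lam_lvl :: "nat \<Rightarrow> nat" where
  "lam_lvl v = (v - 1) div N"

definition lam_base :: "nat \<Rightarrow> nat" where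
  "lam_base c = (c + (N - k)) mod N + 1"

definition mu_cls :: "nat \<Rightarrow> nat" where
  "mu_cls v = (k + (N - v mod N)) mod N"

definition mu_lvl :: "nat \<Rightarrow> nat" where
  "mu_lvl v = v div N"

definition mu_base :: "nat \<Rightarrow> nat" where
  "mu_base c = (k + (N - c)) mod N"

definition class_index :: "nat \<Rightarrow> nat" where
  "class_index c = k + (c + (N - k)) mod N"

lemma lam_residue_classes: "residue_classes N {v. 0 < v} lam_cls lam_lvl lam_base"
proof
  fix v :: nat assume "v \<in> {v. 0 < v}"
  then have v: "0 < v" by simp
  have "(k + v - 1) + (N - k) = (v - 1) + N"
    using v k_less by simp
  then have "lam_base (lam_cls v) = (v - 1) mod N + 1"
    unfolding lam_base_def lam_cls_def by (simp add: mod_add_left_eq)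
  then show "lam_cls v < N \<and> lam_base (lam_cls v) + N * lam_lvl v = v"
    using v N_pos unfolding lam_lvl_def lam_cls_def
    by (metis Suc_pred' add.commute add_Suc_right div_mult_mod_eq mult.commute plus_1_eq_Suc
        mod_less_divisor)
next
  fix c t assume c: "c < N"
  have "k + (lam_base c + N * t) - 1 = k + (c + (N - k)) mod N + N * t"
    unfolding lam_base_def by simp
  then have "lam_cls (lam_base c + N * t) = (k + (c + (N - k)) + N * t) mod N"
    unfolding lam_cls_def by (simp add: mod_add_left_eq mod_add_right_eq)
  also have "k + (c + (N - k)) + N * t = c + N * Suc t"
    using k_less by simp
  also have "(c + N * Suc t) mod N = c mod N"
    by (rule mod_mult_self2)
  finally have "lam_cls (lam_base c + N * t) = c"
    using c by simp
  moreover have "lam_lvl (lam_base c + N * t) = t"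
    unfolding lam_lvl_def lam_base_def using N_pos by simp
  ultimately show "lam_base c + N * t \<in> {v. 0 < v} \<and> lam_cls (lam_base c + N * t) = c
      \<and> lam_lvl (lam_base c + N * t) = t"
    by (simp add: lam_base_def)
qed

lemma mu_residue_classes: "residue_classes N UNIV mu_cls mu_lvl mu_base"
proof
  fix v :: nat
  have "mu_base (mu_cls v) = v mod N"
    unfolding mu_base_def mu_cls_def by (rule mod_add_diff_involution[OF N_pos]) (use N_pos in simp)
  then show "mu_cls v < N \<and> mu_base (mu_cls v) + N * mu_lvl v = v"
    using N_pos by (simp add: mu_cls_def mu_lvl_def)
next
  fix c t assume c: "c < N"
  have base: "mu_base c < N"
    unfolding mu_base_def using N_pos by simp
  then have "(mu_base c + N * t) mod N = mu_base c"
    by simp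
  then have "mu_cls (mu_base c + N * t) = c"
    unfolding mu_cls_def mu_base_def by (simp only: mod_add_diff_involution[OF N_pos c])
  then show "mu_base c + N * t \<in> UNIV \<and> mu_cls (mu_base c + N * t) = c \<and> mu_lvl (mu_base c + N * t) = t"
    using base by (simp add: mu_lvl_def)
qed

sublocale L: residue_classes N "{v. 0 < v}" lam_cls lam_lvl lam_base
  by (rule lam_residue_classes)

sublocale M: residue_classes N UNIV mu_cls mu_lvl mu_base
  by (rule mu_residue_classes)

lemma class_index_props:
  assumes c: "c < N"
  shows "k \<le> class_index c" "class_index c \<le> N + k - 1" "class_index c mod N = c"
    and "lam_base c = class_index c - k + 1" "int k + int (lam_base c) = int (class_index c) + 1"
    and "c = k \<Longrightarrow> class_index c = k \<and> mu_base c = 0"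
    and "c \<noteq> k \<Longrightarrow> k < class_index c \<and> mu_base c = N + k - class_index c"
proof -
  note f1 = mod_add_diff_eq_if[OF c k_less] and f2 = mod_add_diff_eq_if'[OF c k_less]
  show "k \<le> class_index c" "lam_base c = class_index c - k + 1"
    "int k + int (lam_base c) = int (class_index c) + 1"
    unfolding class_index_def lam_base_def by simp_all
  show "class_index c \<le> N + k - 1" "class_index c mod N = c"
    unfolding class_index_def using f1 c k_less by (auto simp: mod_add_self2)
  show "c = k \<Longrightarrow> class_index c = k \<and> mu_base c = 0"
    "c \<noteq> k \<Longrightarrow> k < class_index c \<and> mu_base c = N + k - class_index c"
    unfolding class_index_def mu_base_def using f1 f2 c k_less by auto
qed

lemma lam_rep_class:
  assumes "0 < v"
  shows "lam_rep v = lam_rep (lam_base (lam_cls v))"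
proof -
  have "int k + int v = (int k + int (lam_base (lam_cls v))) + int N * int (lam_lvl v)"
    using L.decompose[of v] assms by (metis add.assoc mem_Collect_eq of_nat_add of_nat_mult)
  then show ?thesis
    using periodic_add_multiple[OF s_periodic] by metis
qed

lemma mu_rep_class: "mu_rep v = mu_rep (mu_base (mu_cls v))"
proof -
  have "int v = int (mu_base (mu_cls v)) + int N * int (mu_lvl v)"
    using M.decompose[of v] by (metis UNIV_I of_nat_add of_nat_mult)
  then have "int k - int v = (int k - int (mu_base (mu_cls v))) + int N * - int (mu_lvl v)"
    by (simp add: algebra_simps)
  then show ?thesis
    using periodic_add_multiple[OF s_periodic] by metis
qed

definition lam_sizes :: "nat multiset \<Rightarrow> nat \<Rightarrow> nat" where
  "lam_sizes Lm c = (if c < N then size (filter_mset (\<lambda>v. lam_cls v = c) Lm) else 0)"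

definition mu_sizes :: "nat multiset \<Rightarrow> nat \<Rightarrow> nat" where
  "mu_sizes M c = (if c < N then size (filter_mset (\<lambda>v. mu_cls v = c) M) else 0)"

definition sized_pairs :: "(nat \<Rightarrow> nat) \<Rightarrow> (nat \<Rightarrow> nat) \<Rightarrow> (nat multiset \<times> nat multiset) set" where
  "sized_pairs a b = {P \<in> mset_pairs s k r. lam_sizes (fst P) = a \<and> mu_sizes (snd P) = b}"

definition size_vectors :: "((nat \<Rightarrow> nat) \<times> (nat \<Rightarrow> nat)) set" where
  "size_vectors = {(a, b). (\<forall>i\<ge>N. a i = 0) \<and> (\<forall>i\<ge>N. b i = 0) \<and>
     int (\<Sum>i<N. a i) = int (\<Sum>i<N. b i) - int r}"

definition class_box :: "(nat \<Rightarrow> nat) \<Rightarrow> (nat \<Rightarrow> nat) \<Rightarrow> ((nat \<Rightarrow> nat multiset) \<times> (nat \<Rightarrow> nat multiset)) set" where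
  "class_box a b = PiE {..<N} (\<lambda>c. part_msets (\<not> lam_rep (lam_base c)) (a c)) \<times>
     PiE {..<N} (\<lambda>c. part_msets (\<not> mu_rep (mu_base c)) (b c))"

definition split_pair :: "nat multiset \<times> nat multiset \<Rightarrow> (nat \<Rightarrow> nat multiset) \<times> (nat \<Rightarrow> nat multiset)" where
  "split_pair P = (L.split_classes (fst P), M.split_classes (snd P))"

definition join_pair :: "(nat \<Rightarrow> nat multiset) \<times> (nat \<Rightarrow> nat multiset) \<Rightarrow> nat multiset \<times> nat multiset" where
  "join_pair W = (L.join_classes (fst W), M.join_classes (snd W))"

definition box_wt :: "(nat \<Rightarrow> nat multiset) \<times> (nat \<Rightarrow> nat multiset) \<Rightarrow> nat" where
  "box_wt W = (\<Sum>c<N. sum_mset (fst W c)) + (\<Sum>c<N. sum_mset (snd W c))"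

lemma mset_pairs_iff:
  "(Lm, M) \<in> mset_pairs s k r \<longleftrightarrow> set_mset Lm \<subseteq> {v. 0 < v} \<and> size M = size Lm + r \<and>
     (\<forall>v\<in>{v. 0 < v}. \<not> lam_rep v \<longrightarrow> count Lm v \<le> 1) \<and> (\<forall>v\<in>UNIV. \<not> mu_rep v \<longrightarrow> count M v \<le> 1)"
proof -
  have pos: "0 \<notin># Lm \<longleftrightarrow> set_mset Lm \<subseteq> {v. 0 < v}"
    by (auto simp: subset_iff) (metis gr0I)
  have "(\<forall>v. \<not> lam_rep v \<longrightarrow> count Lm v \<le> 1) \<longleftrightarrow> (\<forall>v\<in>{v. 0 < v}. \<not> lam_rep v \<longrightarrow> count Lm v \<le> 1)"
    if "0 \<notin># Lm"
    using that by (auto simp: not_in_iff) (metis gr0I le0 le_zero_eq not_in_iff)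
  then show ?thesis
    unfolding mset_pairs_def pos[symmetric] by auto
qed

lemma split_pair_in_class_box_iff:
  assumes "set_mset Lm \<subseteq> {v. 0 < v}"
  shows "split_pair (Lm, M) \<in> class_box a b \<longleftrightarrow>
    ((\<forall>c<N. size (filter_mset (\<lambda>v. lam_cls v = c) Lm) = a c) \<and>
      (\<forall>v\<in>{v. 0 < v}. \<not> lam_rep v \<longrightarrow> count Lm v \<le> 1)) \<and>
    ((\<forall>c<N. size (filter_mset (\<lambda>v. mu_cls v = c) M) = b c) \<and>
      (\<forall>v\<in>UNIV. \<not> mu_rep v \<longrightarrow> count M v \<le> 1))"
proof -
  have "L.split_classes Lm \<in> PiE {..<N} (\<lambda>c. part_msets (\<not> lam_rep (lam_base c)) (a c)) \<longleftrightarrow>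
      (\<forall>c<N. size (filter_mset (\<lambda>v. lam_cls v = c) Lm) = a c) \<and>
      (\<forall>v\<in>{v. 0 < v}. \<not> lam_rep v \<longrightarrow> count Lm v \<le> 1)"
    by (rule L.split_classes_in_PiE_iff[where rep = lam_rep, OF assms]) (rule lam_rep_class, simp)
  moreover have "M.split_classes M \<in> PiE {..<N} (\<lambda>c. part_msets (\<not> mu_rep (mu_base c)) (b c)) \<longleftrightarrow>
      (\<forall>c<N. size (filter_mset (\<lambda>v. mu_cls v = c) M) = b c) \<and>
      (\<forall>v\<in>UNIV. \<not> mu_rep v \<longrightarrow> count M v \<le> 1)"
    by (rule M.split_classes_in_PiE_iff[where rep = mu_rep, OF subset_UNIV]) (rule mu_rep_class)
  ultimately show ?thesis
    unfolding class_box_def split_pair_def mem_Times_iff fst_conv snd_conv by argo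
qed

lemma bij_betw_split_pair:
  assumes "(a, b) \<in> size_vectors"
  shows "bij_betw split_pair (sized_pairs a b) (class_box a b)"
proof (rule bij_betw_byWitness[where f' = join_pair])
  have a0: "\<And>c. N \<le> c \<Longrightarrow> a c = 0" and b0: "\<And>c. N \<le> c \<Longrightarrow> b c = 0"
    using assms by (auto simp: size_vectors_def)
  have "int (\<Sum>c<N. a c) = int (\<Sum>c<N. b c) - int r"
    using assms unfolding size_vectors_def by blast
  then have sums: "(\<Sum>c<N. b c) = (\<Sum>c<N. a c) + r"
    by linarith
  show "\<forall>P\<in>sized_pairs a b. join_pair (split_pair P) = P"
    by (auto simp: sized_pairs_def split_pair_def join_pair_def mset_pairs_iff
        L.join_split_classes M.join_split_classes)
  show "\<forall>W\<in>class_box a b. split_pair (join_pair W) = W"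
    by (auto simp: class_box_def split_pair_def join_pair_def PiE_iff
        L.split_join_classes M.split_join_classes)
  show "split_pair ` sized_pairs a b \<subseteq> class_box a b"
  proof (rule image_subsetI)
    fix P assume "P \<in> sized_pairs a b"
    then obtain Lm M where P: "P = (Lm, M)" "(Lm, M) \<in> mset_pairs s k r"
      and sizes: "lam_sizes Lm = a" "mu_sizes M = b"
      by (cases P) (auto simp: sized_pairs_def)
    then show "split_pair P \<in> class_box a b"
      unfolding P(1) using split_pair_in_class_box_iff[of Lm M a b]
      by (auto simp: mset_pairs_iff lam_sizes_def mu_sizes_def)
  qed
  show "join_pair ` class_box a b \<subseteq> sized_pairs a b"
  proof (rule image_subsetI)
    fix W assume W: "W \<in> class_box a b"
    obtain Lm M where P: "join_pair W = (Lm, M)" by (cases "join_pair W")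
    have D: "set_mset Lm \<subseteq> {v. 0 < v}"
      using P L.set_mset_join_classes by (auto simp: join_pair_def)
    have "split_pair (Lm, M) \<in> class_box a b"
      using W \<open>\<forall>W\<in>class_box a b. split_pair (join_pair W) = W\<close> P by metis
    then have sizes: "\<forall>c<N. size (filter_mset (\<lambda>v. lam_cls v = c) Lm) = a c"
        "\<forall>c<N. size (filter_mset (\<lambda>v. mu_cls v = c) M) = b c"
      and counts: "\<forall>v\<in>{v. 0 < v}. \<not> lam_rep v \<longrightarrow> count Lm v \<le> 1"
        "\<forall>v\<in>UNIV. \<not> mu_rep v \<longrightarrow> count M v \<le> 1"
      unfolding split_pair_in_class_box_iff[OF D] by blast+
    have "size Lm = (\<Sum>c<N. a c)" "size M = (\<Sum>c<N. b c)"
      using sizes L.sum_size_classes[OF D] M.sum_size_classes[of M] by auto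
    then have "(Lm, M) \<in> mset_pairs s k r"
      using D counts sums by (simp add: mset_pairs_iff)
    moreover have "lam_sizes Lm = a" "mu_sizes M = b"
      using sizes a0 b0 by (auto simp: lam_sizes_def mu_sizes_def)
    ultimately show "join_pair W \<in> sized_pairs a b"
      by (simp add: sized_pairs_def P)
  qed
qed

definition base_exp :: "(nat \<Rightarrow> nat) \<Rightarrow> (nat \<Rightarrow> nat) \<Rightarrow> nat \<Rightarrow> int" where
  "base_exp a b i =
     (\<Sum>c<N. int (a c) * upexp N (int k) (lam_base c) i + int (b c) * downexp N (int k) (mu_base c) i)"

definition distinct_shift :: "(nat \<Rightarrow> nat) \<Rightarrow> (nat \<Rightarrow> nat) \<Rightarrow> nat" where
  "distinct_shift a b = (\<Sum>c<N. (if \<not> lam_rep (lam_base c) then a c * (a c - 1) div 2 else 0)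
     + (if \<not> mu_rep (mu_base c) then b c * (b c - 1) div 2 else 0))"

lemma mset_pair_wt_split:
  assumes "(Lm, M) \<in> mset_pairs s k r" "i < N"
  shows "mset_pair_wt N k (Lm, M) i = base_exp (lam_sizes Lm) (mu_sizes M) i + int (box_wt (split_pair (Lm, M)))"
proof -
  have D: "set_mset Lm \<subseteq> {v. 0 < v}"
    using assms(1) by (simp add: mset_pairs_iff)
  have "(\<Sum>v\<in>#Lm. upexp N (int k) v i) =
      (\<Sum>c<N. int (lam_sizes Lm c) * upexp N (int k) (lam_base c) i + int (sum_mset (L.split_classes Lm c)))"
    using L.sum_mset_classes_affine[OF D, of "\<lambda>v. upexp N (int k) v i"]
    by (simp add: upexp_add_multiple[OF N_pos assms(2)] L.size_split_classes lam_sizes_def)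
  moreover have "(\<Sum>v\<in>#M. downexp N (int k) v i) =
      (\<Sum>c<N. int (mu_sizes M c) * downexp N (int k) (mu_base c) i + int (sum_mset (M.split_classes M c)))"
    using M.sum_mset_classes_affine[of M "\<lambda>v. downexp N (int k) v i"]
    by (simp add: downexp_add_multiple[OF N_pos assms(2)] M.size_split_classes mu_sizes_def)
  ultimately show ?thesis
    by (simp add: mset_pair_wt_def base_exp_def box_wt_def split_pair_def sum.distrib)
qed

lemma mset_pair_wt_beyond: "N \<le> i \<Longrightarrow> mset_pair_wt N k P i = 0"
  by (cases P) (simp add: mset_pair_wt_def upexp_beyond[OF N_pos] downexp_beyond[OF N_pos])

lemma count_fps_class_box:
  "count_fps (class_box a b) box_wt = fps_X ^ distinct_shift a b * inverse (\<Prod>c<N. qpoch (a c) * qpoch (b c))"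
proof -
  let ?w = "\<lambda>W. \<Sum>c<N. sum_mset (W c)"
  have "count_fps (class_box a b) box_wt = count_fps (class_box a b) (\<lambda>(x, y). ?w x + ?w y)"
    by (rule count_fps_cong) (auto simp: box_wt_def)
  also have "\<dots> = count_fps (PiE {..<N} (\<lambda>c. part_msets (\<not> lam_rep (lam_base c)) (a c))) ?w *
      count_fps (PiE {..<N} (\<lambda>c. part_msets (\<not> mu_rep (mu_base c)) (b c))) ?w"
    unfolding class_box_def by (rule count_fps_Times) (simp_all add: finite_fibres_PiE_part_msets)
  also have "\<dots> = fps_X ^ distinct_shift a b * inverse (\<Prod>c<N. qpoch (a c) * qpoch (b c))"
    unfolding count_fps_PiE_part_msets[OF finite_lessThan] distinct_shift_def inverse_prod_fps
      fps_inverse_mult prod.distrib sum.distrib power_add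
    by (simp add: ac_simps)
  finally show ?thesis .
qed

end

section \<open>The right-hand side\<close>

lemma triangular_sign_div4:
  fixes \<sigma> \<tau> :: int
  assumes "\<sigma> = 1 \<or> \<sigma> = -1" "\<tau> = 1 \<or> \<tau> = -1"
  shows "int x * (int x - 1) * (1 - \<sigma> * \<tau>) div 4 = int (if \<sigma> \<noteq> \<tau> then x * (x - 1) div 2 else 0)"
proof (cases "\<sigma> = \<tau>")
  case True
  then show ?thesis using assms by auto
next
  case False
  then have "1 - \<sigma> * \<tau> = 2" using assms by auto
  moreover have "(y * 2) div 4 = y div 2" for y :: int
    by presburger
  moreover have "int (x * (x - 1) div 2) = int x * (int x - 1) div 2"
    by (cases x) (simp_all add: zdiv_int algebra_simps)
  ultimately show ?thesis using False by simp
qed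

lemma coeff_mon_p_cong:
  assumes "\<And>i. i < N \<Longrightarrow> m i = m' i"
  shows "coeff_mon_p N m F e = coeff_mon_p N m' F e"
proof -
  have "(\<forall>i<N. e i = m i + int n) \<longleftrightarrow> (\<forall>i<N. e i = m' i + int n)" for n
    using assms by auto
  then show ?thesis unfolding coeff_mon_p_def by (simp only:)
qed

lemma coeff_mon_p_eq:
  assumes "0 < N" "\<forall>i<N. e i = m i + int n"
  shows "coeff_mon_p N m F e = fps_nth F n"
proof -
  have "(\<forall>i<N. e i = m i + int n') \<longleftrightarrow> n' = n" for n'
    using assms by auto
  then show ?thesis by (auto simp: coeff_mon_p_def)
qed

lemma coeff_mon_p_shift:
  assumes "0 < N"
  shows "coeff_mon_p N (\<lambda>i. m i + int q) F e = coeff_mon_p N m (fps_X ^ q * F) e"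
proof (cases "\<exists>n. \<forall>i<N. e i = m i + int n")
  case True
  then obtain n where n: "\<forall>i<N. e i = m i + int n" by blast
  show ?thesis
  proof (cases "q \<le> n")
    case True
    with n have "\<forall>i<N. e i = m i + int q + int (n - q)" by (simp add: of_nat_diff)
    then have "coeff_mon_p N (\<lambda>i. m i + int q) F e = fps_nth F (n - q)"
      by (intro coeff_mon_p_eq[OF assms]) simp
    with True show ?thesis
      by (simp add: coeff_mon_p_eq[OF assms n] fps_X_power_mult_nth)
  next
    case False
    with n assms have "\<not> (\<exists>n'. \<forall>i<N. e i = m i + int q + int n')"
      by auto
    then have "coeff_mon_p N (\<lambda>i. m i + int q) F e = 0"
      by (simp only: coeff_mon_p_def if_not_P if_False)
    with False show ?thesis
      by (simp add: coeff_mon_p_eq[OF assms n] fps_X_power_mult_nth)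
  qed
next
  case False
  then have "\<not> (\<exists>n'. \<forall>i<N. e i = m i + int q + int n')"
    by (metis add.assoc of_nat_add)
  with False show ?thesis by (simp only: coeff_mon_p_def if_not_P if_False)
qed

context parity_setup
begin

lemma bij_betw_class_index: "bij_betw class_index {..<N} {k..N + k - 1}"
proof (rule bij_betw_byWitness[where f' = "\<lambda>j. j mod N"])
  show "\<forall>j\<in>{k..N + k - 1}. class_index (j mod N) = j"
  proof
    fix j assume j: "j \<in> {k..N + k - 1}"
    have "j + (N - k) = (j - k) + N" using j k_less by auto
    then have "(j mod N + (N - k)) mod N = (j - k) mod N"
      by (simp add: mod_add_left_eq)
    also have "\<dots> = j - k" using j N_pos by auto
    finally show "class_index (j mod N) = j" unfolding class_index_def using j by simp
  qed
  show "class_index ` {..<N} \<subseteq> {k..N + k - 1}" using class_index_props(1,2) by auto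
qed (use class_index_props(3) N_pos in auto)

lemma s_class_index_Suc: "c < N \<Longrightarrow> s (int (class_index c) + 1) = s (int k + int (lam_base c))"
  using class_index_props(5) by simp

lemma s_class_index: "c < N \<Longrightarrow> s (int (class_index c)) = s (int k - int (mu_base c))"
proof -
  assume c: "c < N"
  show ?thesis
  proof (cases "c = k")
    case True then show ?thesis using class_index_props(6)[OF c] by simp
  next
    case False
    then have "k < class_index c" "mu_base c = N + k - class_index c" using class_index_props(7)[OF c] by auto
    moreover have "class_index c \<le> N + k - 1" using class_index_props(2)[OF c] .
    ultimately have "int k - int (mu_base c) = int (class_index c) + int N * (-1)" by (simp add: of_nat_diff)
    then show ?thesis using periodic_add_multiple[OF s_periodic, of "int (class_index c)" "-1"] by simp
  qed
qed

lemma upexp_lam_base: "c < N \<Longrightarrow> upexp N (int k) (lam_base c) i = zr N k (class_index c) i"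
  using upexp_eq_zr[of N k "class_index c - k" i] class_index_props(1,4)[of c] by simp

text \<open>The class of \<open>k\<close> has base \<open>0\<close>, while the right-hand side gives it the full period
  \<open>z_(k,N+k-1) = p\<close>; this is where the factor \<open>p^(-b_k)\<close> comes from.\<close>

lemma downexp_mu_base:
  assumes "c < N" "i < N"
  shows "downexp N (int k) (mu_base c) i = zr N (class_index c) (N + k - 1) i - (if c = k then 1 else 0)"
proof (cases "c = k")
  case True
  then show ?thesis
    using class_index_props(6)[OF assms(1)] zr_full_period[OF N_pos assms(2), of k] by (simp add: downexp_def)
next
  case False
  define j where "j = class_index c"
  have j: "k < j" "j \<le> N + k - 1" "mu_base c = N + k - j"
    using class_index_props(2,7)[OF assms(1)] False by (auto simp: j_def)
  have "downexp N (int k) (mu_base c) i = upexp N (int j + int N * -1) (Suc (N + k - 1 - j)) i"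
    using j by (simp add: downexp_eq_upexp of_nat_diff Suc_diff_Suc algebra_simps)
  also have "\<dots> = zr N j (N + k - 1) i"
    using j by (simp only: upexp_shift_period upexp_eq_zr) simp
  finally show ?thesis using False by (simp add: j_def)
qed

lemma sum_rhs_quadratic:
  "(\<Sum>j\<in>{k..N+k-1}. (int (a (j mod N)) * (int (a (j mod N)) - 1) * (1 - s (int k) * s (int j + 1))) div 4
      + (int (b (j mod N)) * (int (b (j mod N)) - 1) * (1 - s (int k) * s (int j))) div 4)
    = int (distinct_shift a b)"
  (is "sum ?G {k..N+k-1} = _")
proof -
  have "sum ?G {k..N+k-1} = (\<Sum>c<N. ?G (class_index c))"
    by (rule sum.reindex_bij_betw[OF bij_betw_class_index, symmetric])
  also have "\<dots> = int (distinct_shift a b)"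
    unfolding distinct_shift_def of_nat_sum
  proof (rule sum.cong[OF refl])
    fix c assume "c \<in> {..<N}"
    then have c: "c < N" by simp
    show "?G (class_index c) = int ((if \<not> lam_rep (lam_base c) then a c * (a c - 1) div 2 else 0)
        + (if \<not> mu_rep (mu_base c) then b c * (b c - 1) div 2 else 0))"
      using triangular_sign_div4[OF s_sign[rule_format] s_sign[rule_format]]
      by (simp add: class_index_props(3)[OF c] s_class_index_Suc[OF c] s_class_index[OF c] eq_commute)
  qed
  finally show ?thesis .
qed

lemma sum_rhs_linear:
  assumes "i < N"
  shows "(\<Sum>j\<in>{k..N+k-1}. int (a (j mod N)) * zr N k j i + int (b (j mod N)) * zr N j (N+k-1) i)
    = base_exp a b i + int (b k)"
  (is "sum ?G {k..N+k-1} = _")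
proof -
  have "sum ?G {k..N+k-1} = (\<Sum>c<N. ?G (class_index c))"
    by (rule sum.reindex_bij_betw[OF bij_betw_class_index, symmetric])
  also have "\<dots> = (\<Sum>c<N. (int (a c) * upexp N (int k) (lam_base c) i
      + int (b c) * downexp N (int k) (mu_base c) i) + (if c = k then int (b c) else 0))"
  proof (rule sum.cong[OF refl])
    fix c assume "c \<in> {..<N}"
    then have c: "c < N" by simp
    show "?G (class_index c) = (int (a c) * upexp N (int k) (lam_base c) i
        + int (b c) * downexp N (int k) (mu_base c) i) + (if c = k then int (b c) else 0)"
      unfolding class_index_props(3)[OF c] upexp_lam_base[OF c] downexp_mu_base[OF c assms]
      by (simp add: algebra_simps)
  qed
  also have "\<dots> = base_exp a b i + int (b k)"
    unfolding sum.distrib base_exp_def using k_less by simp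
  finally show ?thesis .
qed

lemma rhs_mon_eq:
  assumes "i < N"
  shows "rhs_mon N s k a b i = base_exp a b i + int (distinct_shift a b)"
  unfolding rhs_mon_def sum_rhs_quadratic sum_rhs_linear[OF assms] using assms by simp

lemma card_sized_fibre:
  assumes ab: "(a, b) \<in> size_vectors" and e: "\<forall>i\<ge>N. e i = 0"
  shows "real (card {P \<in> sized_pairs a b. mset_pair_wt N k P = e}) =
    coeff_mon_p N (base_exp a b) (count_fps (class_box a b) box_wt) e"
proof -
  have wt: "mset_pair_wt N k P = e \<longleftrightarrow> (\<forall>i<N. e i = base_exp a b i + int (box_wt (split_pair P)))"
    if P_mem: "P \<in> sized_pairs a b" for P
  proof -
    obtain Lm M where P: "P = (Lm, M)" "(Lm, M) \<in> mset_pairs s k r" "lam_sizes Lm = a" "mu_sizes M = b"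
      using P_mem by (cases P) (auto simp: sized_pairs_def)
    have "mset_pair_wt N k P = e \<longleftrightarrow> (\<forall>i<N. mset_pair_wt N k P i = e i)"
    proof
      assume "\<forall>i<N. mset_pair_wt N k P i = e i"
      then show "mset_pair_wt N k P = e"
        using e mset_pair_wt_beyond[of _ P] by (metis ext not_less)
    qed simp
    then show ?thesis
      using mset_pair_wt_split[OF P(2)] P by auto
  qed
  show ?thesis
  proof (cases "\<exists>n. \<forall>i<N. e i = base_exp a b i + int n")
    case True
    then obtain n where n: "\<forall>i<N. e i = base_exp a b i + int n" by blast
    have "bij_betw split_pair {P \<in> sized_pairs a b. mset_pair_wt N k P = e} {W \<in> class_box a b. box_wt W = n}"
      by (rule bij_betw_Collect[OF bij_betw_split_pair[OF ab]]) (use n N_pos wt in auto)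
    then show ?thesis
      by (simp add: coeff_mon_p_eq[OF N_pos n] bij_betw_same_card)
  next
    case False
    then have empty: "{P \<in> sized_pairs a b. mset_pair_wt N k P = e} = {}"
      using wt by blast
    show ?thesis
      unfolding empty using False by (simp only: coeff_mon_p_def if_not_P if_False card.empty of_nat_0)
  qed
qed

lemma rhs_coeff_eq:
  assumes "(a, b) \<in> size_vectors" "\<forall>i\<ge>N. e i = 0"
  shows "rhs_coeff N s k a b e = real (card {P \<in> sized_pairs a b. mset_pair_wt N k P = e})"
proof -
  have "rhs_coeff N s k a b e =
      coeff_mon_p N (\<lambda>i. base_exp a b i + int (distinct_shift a b)) (inverse (\<Prod>c<N. qpoch (a c) * qpoch (b c))) e"
    unfolding rhs_coeff_def by (rule coeff_mon_p_cong) (simp add: rhs_mon_eq)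
  also have "\<dots> = coeff_mon_p N (base_exp a b) (count_fps (class_box a b) box_wt) e"
    by (simp add: coeff_mon_p_shift[OF N_pos] count_fps_class_box)
  finally show ?thesis
    by (simp add: card_sized_fibre[OF assms])
qed

end

lemma has_sum_indicator:
  assumes "finite {x\<in>A. P x}"
  shows "((\<lambda>x. if P x then 1 else 0) has_sum real (card {x\<in>A. P x})) A"
proof -
  have "((\<lambda>x. 1::real) has_sum real (card {x\<in>A. P x})) {x\<in>A. P x}"
    using has_sum_finite[OF assms, of "\<lambda>_. 1::real"] by simp
  then show ?thesis
    by (rule has_sum_cong_neutral[THEN iffD2, rotated -1]) auto
qed

lemma has_sum_card_fibres:
  assumes "finite S" "g ` S \<subseteq> B" "\<And>b. b \<in> B \<Longrightarrow> f b = real (card {x\<in>S. g x = b})"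
  shows "(f has_sum real (card S)) B"
proof -
  have "(\<Sum>b\<in>g ` S. f b) = real (\<Sum>b\<in>g ` S. card {x\<in>S. g x = b})"
    using assms(2,3) by (auto intro!: sum.cong)
  also have "\<dots> = real (card S)"
    by (subst sum_card_fibres[OF assms(1)]) (use assms(1) in auto)
  finally have "(f has_sum real (card S)) (g ` S)"
    using has_sum_finite[of "g ` S" f] assms(1) by simp
  moreover have zero: "f b = 0" if "b \<in> B - g ` S" for b
  proof -
    have empty: "{x\<in>S. g x = b} = {}" using that by auto
    show ?thesis using that assms(3)[of b] unfolding empty by simp
  qed
  ultimately show ?thesis
    by (rule has_sum_cong_neutral[THEN iffD2, rotated -1]) (use assms(2) zero in auto)
qed

context parity_setup
begin

lemma sum_mset_pair_wt: "(\<Sum>i<N. mset_pair_wt N k (Lm, M) i) = int (sum_mset Lm) + int (sum_mset M)"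
proof -
  have "(\<Sum>i<N. \<Sum>v\<in>#X. upexp N (int k) v i) = int (sum_mset X)"
    "(\<Sum>i<N. \<Sum>v\<in>#X. downexp N (int k) v i) = int (sum_mset X)" for X
    by (induction X) (simp_all add: sum.distrib sum_upexp[OF N_pos] sum_downexp[OF N_pos])
  then show ?thesis
    by (simp add: mset_pair_wt_def sum.distrib)
qed

lemma finite_mset_pair_wt_fibre: "finite {P \<in> mset_pairs s k r. mset_pair_wt N k P = e}"
proof -
  define E where "E = nat (\<Sum>i<N. e i)"
  let ?U = "\<lambda>m. \<Union>n\<in>{..m}. multisets_of_size {..E} n"
  have "{P \<in> mset_pairs s k r. mset_pair_wt N k P = e} \<subseteq> ?U E \<times> ?U (E + r)"
  proof
    fix P assume "P \<in> {P \<in> mset_pairs s k r. mset_pair_wt N k P = e}"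
    then obtain Lm M where P: "P = (Lm, M)" "(Lm, M) \<in> mset_pairs s k r" "mset_pair_wt N k (Lm, M) = e"
      by (cases P) auto
    have "(\<Sum>i<N. e i) = int (sum_mset Lm + sum_mset M)"
      using sum_mset_pair_wt[of Lm M] unfolding P(3) by (simp only: of_nat_add)
    then have sum: "sum_mset Lm + sum_mset M = E"
      unfolding E_def by (simp only: nat_int)
    have "0 \<notin># Lm"
      using P(2) by (simp add: mset_pairs_def)
    then have size: "size Lm \<le> sum_mset Lm"
      by (induction Lm) auto
    have elems: "set_mset Lm \<subseteq> {..E}" "set_mset M \<subseteq> {..E}"
      using sum by (auto dest!: multi_member_split)
    have "size M = size Lm + r"
      using P(2) by (simp add: mset_pairs_def)
    then have "Lm \<in> ?U E" "M \<in> ?U (E + r)"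
      using elems size sum by (auto simp: multisets_of_size_def intro!: bexI[of _ "size Lm"] bexI[of _ "size M"])
    then show "P \<in> ?U E \<times> ?U (E + r)"
      using P(1) by simp
  qed
  moreover have "finite (?U E \<times> ?U (E + r))" by auto
  ultimately show ?thesis by (rule finite_subset)
qed

definition class_sizes :: "(nat \<Rightarrow> nat) \<times> nat list \<times> (nat \<Rightarrow> nat) \<Rightarrow> (nat \<Rightarrow> nat) \<times> (nat \<Rightarrow> nat)" where
  "class_sizes x = (lam_sizes (fst (to_msets x)), mu_sizes (snd (to_msets x)))"

lemma class_sizes_in_size_vectors:
  assumes "x \<in> Rset N s k r"
  shows "class_sizes x \<in> size_vectors"
proof -
  obtain Lm M where P: "to_msets x = (Lm, M)" by (cases "to_msets x")
  then have "(Lm, M) \<in> mset_pairs s k r"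
    using bij_betw_apply[OF bij_betw_to_msets assms] by simp
  then have D: "set_mset Lm \<subseteq> {v. 0 < v}" and sz: "size M = size Lm + r"
    by (simp_all add: mset_pairs_iff)
  have "(\<Sum>c<N. lam_sizes Lm c) = size Lm" "(\<Sum>c<N. mu_sizes M c) = size M"
    using L.sum_size_classes[OF D] M.sum_size_classes[of M] by (simp_all add: lam_sizes_def mu_sizes_def)
  then have "int (\<Sum>c<N. lam_sizes Lm c) = int (\<Sum>c<N. mu_sizes M c) - int r"
    using sz by simp
  moreover have "\<forall>i\<ge>N. lam_sizes Lm i = 0" "\<forall>i\<ge>N. mu_sizes M i = 0"
    by (simp_all add: lam_sizes_def mu_sizes_def)
  ultimately show ?thesis
    unfolding class_sizes_def P fst_conv snd_conv size_vectors_def mem_Collect_eq prod.case by blast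
qed

lemma card_Rset_fibre:
  "card {x \<in> Rset N s k r. wtR N k x = e \<and> class_sizes x = (a, b)} =
    card {P \<in> sized_pairs a b. mset_pair_wt N k P = e}"
proof -
  have "bij_betw to_msets {x \<in> Rset N s k r. wtR N k x = e \<and> class_sizes x = (a, b)}
      {P \<in> mset_pairs s k r. mset_pair_wt N k P = e \<and> lam_sizes (fst P) = a \<and> mu_sizes (snd P) = b}"
    by (rule bij_betw_Collect[OF bij_betw_to_msets]) (simp add: wtR_eq_mset_pair_wt class_sizes_def)
  then show ?thesis
    by (simp add: bij_betw_same_card sized_pairs_def conj_ac)
qed

lemma finite_Rset_wt_fibre: "finite {x \<in> Rset N s k r. wtR N k x = e}"
proof -
  have "bij_betw to_msets {x \<in> Rset N s k r. wtR N k x = e} {P \<in> mset_pairs s k r. mset_pair_wt N k P = e}"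
    by (rule bij_betw_Collect[OF bij_betw_to_msets]) (simp add: wtR_eq_mset_pair_wt)
  then show ?thesis
    using finite_mset_pair_wt_fibre bij_betw_finite by blast
qed

lemma Rset_wt_has_sum_rhs:
  assumes e: "\<forall>i\<ge>N. e i = 0"
  defines "S \<equiv> {x \<in> Rset N s k r. wtR N k x = e}"
  shows "((\<lambda>x. if wtR N k x = e then 1 else 0) has_sum real (card S)) (Rset N s k r)"
    and "((\<lambda>(a, b). rhs_coeff N s k a b e) has_sum real (card S)) size_vectors"
proof -
  show "((\<lambda>x. if wtR N k x = e then 1 else 0) has_sum real (card S)) (Rset N s k r)"
    unfolding S_def by (rule has_sum_indicator[OF finite_Rset_wt_fibre])
  have "rhs_coeff N s k a b e = real (card {x \<in> S. class_sizes x = (a, b)})" if "(a, b) \<in> size_vectors" for a b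
    using rhs_coeff_eq[OF that e] card_Rset_fibre[of e a b] by (simp add: S_def conj_ac)
  then show "((\<lambda>(a, b). rhs_coeff N s k a b e) has_sum real (card S)) size_vectors"
    by (intro has_sum_card_fibres[where g = class_sizes])
      (auto simp: S_def finite_Rset_wt_fibre class_sizes_in_size_vectors)
qed

end

theorem lemma7p4:
  fixes N m n k r :: nat and s :: "int \<Rightarrow> int"
  assumes "m \<noteq> n" and "N = m + n" and "N \<ge> 3"
    and "\<forall>i. s i = 1 \<or> s i = -1"
    and "\<forall>i. s (i + int N) = s i"
    and "card {i \<in> {1..int N}. s i = 1} = m"
    and "k < N" and "r > 0"
  shows "\<forall>e :: nat \<Rightarrow> int. (\<forall>i\<ge>N. e i = 0) \<longrightarrow>
           (\<exists>c :: real.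
              ((\<lambda>x. if wtR N k x = e then 1 else 0) has_sum c) (Rset N s k r) \<and>
              ((\<lambda>(a, b). rhs_coeff N s k a b e) has_sum c)
                {(a, b). (\<forall>i\<ge>N. a i = 0) \<and> (\<forall>i\<ge>N. b i = 0) \<and>
                         int (\<Sum>i<N. a i) = int (\<Sum>i<N. b i) - int r})"
proof -
  interpret parity_setup N s k r
    by unfold_locales (use assms in auto)
  show ?thesis
    using Rset_wt_has_sum_rhs unfolding size_vectors_def by blast
qed

end
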